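(* In the finite-eigenvalue setting below, for every bounded operator $X(s)$, $$\|\tilde X(s)\|\le\sqrt{m(s)}\,\frac{\|X(s)\|}{g(s)}.$$
   Context: Finite-eigenvalue setting: $H(s)$ is a bounded self-adjoint operator on a Hilbert space $\mathcal H$; $P(s)=\sum_{j=1}^{m(s)}P_j(s)$ where $P_j(s)$ are spectral projections of $H(s)$ for distinct eigenvalues $\lambda_1(s),\dots,\lambda_{m(s)}(s)$ (each possibly degenerate), and $g(s):=\operatorname{dist}(\{\lambda_j(s)\}_j,\sigma(H(s))\setminus\{\lambda_j(s)\}_j)>0$. $\Gamma(s)$ is a positively oriented contour enclosing $\lambda_1(s),\dots,\lambda_{m(s)}(s)$ and no other spectrum; $R_z=(H(s)-z)^{-1}$; $\tilde X(s):=\frac1{2\pi i}\oint_{\Gamma(s)}R_zX(s)R_z\,dz$. *)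

theory Defs
  imports "HOL-Complex_Analysis.Complex_Analysis"
begin

text \<open>HOL-Analysis only provides real inner product spaces, so the standard
  notions of complex normed space and complex inner product space are
  introduced here as type classes.  The inner product is linear in the
  second and conjugate-linear in the first argument.\<close>

class complex_vector = real_vector +
  fixes scaleC :: "complex \<Rightarrow> 'a \<Rightarrow> 'a" (infixr \<open>*\<^sub>C\<close> 75)
  assumes scaleC_add_right: "a *\<^sub>C (x + y) = a *\<^sub>C x + a *\<^sub>C y"
    and scaleC_add_left: "(a + b) *\<^sub>C x = a *\<^sub>C x + b *\<^sub>C x"
    and scaleC_scaleC: "a *\<^sub>C (b *\<^sub>C x) = (a * b) *\<^sub>C x"
    and scaleC_one: "1 *\<^sub>C x = x"
    and scaleR_scaleC: "r *\<^sub>R x = complex_of_real r *\<^sub>C x"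

class complex_normed_vector = complex_vector + real_normed_vector +
  assumes norm_scaleC: "norm (a *\<^sub>C x) = cmod a * norm x"

class complex_inner = complex_normed_vector +
  fixes cinner :: "'a \<Rightarrow> 'a \<Rightarrow> complex"
  assumes cinner_commute: "cinner x y = cnj (cinner y x)"
    and cinner_add_right: "cinner x (y + z) = cinner x y + cinner x z"
    and cinner_scaleC_right: "cinner x (a *\<^sub>C y) = a * cinner x y"
    and cinner_self_norm: "cinner x x = complex_of_real ((norm x)\<^sup>2)"

instantiation complex :: complex_inner
begin
definition scaleC_complex_def: "scaleC a (x::complex) = a * x"
definition cinner_complex_def: "cinner (x::complex) y = cnj x * y"
instance
proof
  fix a b :: complex and x y z :: complex and r :: real
  show "a *\<^sub>C (x + y) = a *\<^sub>C x + a *\<^sub>C y" by (simp add: scaleC_complex_def algebra_simps)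
  show "(a + b) *\<^sub>C x = a *\<^sub>C x + b *\<^sub>C x" by (simp add: scaleC_complex_def algebra_simps)
  show "a *\<^sub>C (b *\<^sub>C x) = (a * b) *\<^sub>C x" by (simp add: scaleC_complex_def)
  show "1 *\<^sub>C x = x" by (simp add: scaleC_complex_def)
  show "r *\<^sub>R x = complex_of_real r *\<^sub>C x" by (simp add: scaleC_complex_def scaleR_conv_of_real)
  show "norm (a *\<^sub>C x) = cmod a * norm x" by (simp add: scaleC_complex_def norm_mult)
  show "cinner x y = cnj (cinner y x)" by (simp add: cinner_complex_def)
  show "cinner x (y + z) = cinner x y + cinner x z" by (simp add: cinner_complex_def algebra_simps)
  show "cinner x (a *\<^sub>C y) = a * cinner x y" by (simp add: cinner_complex_def scaleC_complex_def)
  show "cinner x x = complex_of_real ((norm x)\<^sup>2)"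
    by (simp add: cinner_complex_def mult.commute flip: complex_norm_square of_real_power)
qed
end

text \<open>Bounded operators on a complex space are represented as elements of
  \<open>'a \<Rightarrow>\<^sub>L 'a\<close> (bounded real-linear maps, with the operator norm) that are
  in addition complex-linear.\<close>

definition clinear_op :: "('a::complex_normed_vector \<Rightarrow>\<^sub>L 'b::complex_normed_vector) \<Rightarrow> bool" where
  "clinear_op A \<longleftrightarrow> (\<forall>c x. blinfun_apply A (c *\<^sub>C x) = c *\<^sub>C blinfun_apply A x)"

definition cscaleL :: "complex \<Rightarrow> ('a::complex_normed_vector \<Rightarrow>\<^sub>L 'b::complex_normed_vector) \<Rightarrow> ('a \<Rightarrow>\<^sub>L 'b)" where
  "cscaleL c A = Blinfun (\<lambda>x. c *\<^sub>C blinfun_apply A x)"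

definition self_adjoint_op :: "('a::complex_inner \<Rightarrow>\<^sub>L 'a) \<Rightarrow> bool" where
  "self_adjoint_op H \<longleftrightarrow> clinear_op H \<and>
     (\<forall>x y. cinner (blinfun_apply H x) y = cinner x (blinfun_apply H y))"

definition invertible_op :: "('a::complex_normed_vector \<Rightarrow>\<^sub>L 'a) \<Rightarrow> bool" where
  "invertible_op A \<longleftrightarrow> (\<exists>B. B o\<^sub>L A = id_blinfun \<and> A o\<^sub>L B = id_blinfun)"

definition inverse_op :: "('a::complex_normed_vector \<Rightarrow>\<^sub>L 'a) \<Rightarrow> ('a \<Rightarrow>\<^sub>L 'a)" where
  "inverse_op A = (THE B. B o\<^sub>L A = id_blinfun \<and> A o\<^sub>L B = id_blinfun)"

definition op_spectrum :: "('a::complex_normed_vector \<Rightarrow>\<^sub>L 'a) \<Rightarrow> complex set" where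
  "op_spectrum H = {z. \<not> invertible_op (H - cscaleL z id_blinfun)}"

definition is_eigenvalue :: "('a::complex_normed_vector \<Rightarrow>\<^sub>L 'a) \<Rightarrow> complex \<Rightarrow> bool" where
  "is_eigenvalue H \<mu> \<longleftrightarrow> (\<exists>x. x \<noteq> 0 \<and> blinfun_apply H x = \<mu> *\<^sub>C x)"

definition resolvent :: "('a::complex_normed_vector \<Rightarrow>\<^sub>L 'a) \<Rightarrow> complex \<Rightarrow> ('a \<Rightarrow>\<^sub>L 'a)" where
  "resolvent H z = inverse_op (H - cscaleL z id_blinfun)"

text \<open>Contour integral of an operator-valued function along a path
  \<open>\<gamma> :: real \<Rightarrow> complex\<close> parametrised over \<open>[0,1]\<close>, in the same way as the
  library's \<open>has_contour_integral\<close> (Bochner/Henstock integral in the Banach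
  space of operators).\<close>
definition op_contour_integral ::
  "(complex \<Rightarrow> ('a::complex_normed_vector \<Rightarrow>\<^sub>L 'b::complex_normed_vector)) \<Rightarrow> (real \<Rightarrow> complex) \<Rightarrow> ('a \<Rightarrow>\<^sub>L 'b)" where
  "op_contour_integral f \<gamma> =
     integral {0..1} (\<lambda>t. cscaleL (vector_derivative \<gamma> (at t within {0..1})) (f (\<gamma> t)))"

definition tilde_op ::
  "('a::complex_normed_vector \<Rightarrow>\<^sub>L 'a) \<Rightarrow> (real \<Rightarrow> complex) \<Rightarrow> ('a \<Rightarrow>\<^sub>L 'a) \<Rightarrow> ('a \<Rightarrow>\<^sub>L 'a)" where
  "tilde_op H \<Gamma> X = cscaleL (1 / (2 * of_real pi * \<i>))
     (op_contour_integral (\<lambda>z. resolvent H z o\<^sub>L X o\<^sub>L resolvent H z) \<Gamma>)"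

end

(* Let P_j be the orthogonal projection onto the eigenspace of \<lambda>_j, P = \<Sum>_j P_j and
   Q = 1 - P.  Replacing the eigenvalues by a real number c far away from everything gives the
   self-adjoint operator H' = H Q + c P (eproj j, eproj_sum, eproj_compl and moved c below),
   whose resolvent R'_z is holomorphic inside \<Gamma>, and
   R_z = R'_z Q + \<Sum>_j P_j / (\<lambda>_j - z).  Expanding \<langle>u, R_z X R_z v\<rangle> accordingly, Cauchy's
   theorem and integral formula give
     \<langle>u, X~ v\<rangle> = - \<Sum>_j (\<langle>u, R'_\<lambda>_j Q X P_j v\<rangle> + \<langle>P_j u, X R'_\<lambda>_j Q v\<rangle>),
   the products of two poles integrating to zero.  The spectrum of H' keeps distance g from
   every \<lambda>_j (that \<lambda>_j itself leaves the spectrum uses that isolated spectral points of a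
   self-adjoint operator are eigenvalues), so |R'_\<lambda>_j| \<le> 1/g.  Cauchy-Schwarz over j and
   |Q u| |P v| + |P u| |Q v| \<le> |u| |v| then give |\<langle>u, X~ v\<rangle>| \<le> sqrt m |X| |u| |v| / g. *)

theory Submission
  imports Defs
begin

section \<open>Complex inner product spaces\<close>

lemma scaleC_zero_right [simp]: "a *\<^sub>C (0::'a::complex_vector) = 0"
  using scaleC_add_right[of a "0::'a" 0] by simp

lemma scaleC_zero_left [simp]: "(0::complex) *\<^sub>C (x::'a::complex_vector) = 0"
  using scaleC_add_left[of 0 0 x] by simp

lemma scaleC_minus_right: "a *\<^sub>C (- (x::'a::complex_vector)) = - (a *\<^sub>C x)"
  using scaleC_add_right[of a x "-x"] by (simp add: eq_neg_iff_add_eq_0 add.commute)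

lemma scaleC_diff_right: "a *\<^sub>C ((x::'a::complex_vector) - y) = a *\<^sub>C x - a *\<^sub>C y"
  by (simp only: diff_conv_add_uminus scaleC_add_right scaleC_minus_right)

lemma scaleC_minus_left: "(- a) *\<^sub>C (x::'a::complex_vector) = - (a *\<^sub>C x)"
  using scaleC_add_left[of a "-a" x] by (simp add: eq_neg_iff_add_eq_0 add.commute)

lemma scaleC_diff_left: "(a - b) *\<^sub>C (x::'a::complex_vector) = a *\<^sub>C x - b *\<^sub>C x"
  by (simp only: diff_conv_add_uminus scaleC_add_left scaleC_minus_left)

lemma scaleC_of_real: "complex_of_real r *\<^sub>C (x::'a::complex_vector) = r *\<^sub>R x"
  by (simp add: scaleR_scaleC)

lemma scaleC_scaleR_commute: "a *\<^sub>C (r *\<^sub>R (x::'a::complex_vector))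
  = r *\<^sub>R (a *\<^sub>C x)"
  by (simp add: scaleR_scaleC scaleC_scaleC mult.commute)

lemma scaleC_sum_right: "a *\<^sub>C (\<Sum>i\<in>I. f i)
  = (\<Sum>i\<in>I. a *\<^sub>C (f i::'a::complex_vector))"
  by (induction I rule: infinite_finite_induct) (auto simp: scaleC_add_right)

lemma scaleC_eq_0_iff: "a *\<^sub>C (x::'a::complex_vector) = 0 \<longleftrightarrow> a = 0 \<or> x = 0"
proof
  assume ax: "a *\<^sub>C x = 0"
  show "a = 0 \<or> x = 0"
  proof (cases "a = 0")
    case False
    have "x = inverse a *\<^sub>C (a *\<^sub>C x)" using False by (simp add: scaleC_scaleC scaleC_one)
    then show ?thesis using ax by simp
  qed simp
qed auto

lemma bounded_linear_scaleC: "bounded_linear (\<lambda>x::'a::complex_normed_vector. a *\<^sub>C x)"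
  by (rule bounded_linear_intro[where K="cmod a"])
     (auto simp: scaleC_add_right scaleC_scaleR_commute norm_scaleC)

lemma cinner_add_left: "cinner (x + y) (z::'a::complex_inner) = cinner x z + cinner y z"
  by (subst (1 2 3) cinner_commute) (simp add: cinner_add_right)

lemma cinner_scaleC_left: "cinner (a *\<^sub>C x) (y::'a::complex_inner) = cnj a * cinner x y"
  by (subst (1 2) cinner_commute) (simp add: cinner_scaleC_right)

lemma cinner_zero_right [simp]: "cinner x (0::'a::complex_inner) = 0"
  using cinner_add_right[of x "0::'a" 0] by simp

lemma cinner_zero_left [simp]: "cinner (0::'a::complex_inner) x = 0"
  using cinner_add_left[of "0::'a" 0 x] by simp

lemma cinner_minus_right: "cinner x (- (y::'a::complex_inner)) = - cinner x y"
  using cinner_add_right[of x y "-y"] by (simp add: eq_neg_iff_add_eq_0 add.commute)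

lemma cinner_minus_left: "cinner (- x) (y::'a::complex_inner) = - cinner x y"
  using cinner_add_left[of x "-x" y] by (simp add: eq_neg_iff_add_eq_0 add.commute)

lemma cinner_diff_right: "cinner x ((y::'a::complex_inner) - z) = cinner x y - cinner x z"
  by (simp only: diff_conv_add_uminus cinner_add_right cinner_minus_right)

lemma cinner_diff_left: "cinner ((x::'a::complex_inner) - y) z = cinner x z - cinner y z"
  by (simp only: diff_conv_add_uminus cinner_add_left cinner_minus_left)

lemma cinner_scaleR_right: "cinner x (r *\<^sub>R (y::'a::complex_inner)) = complex_of_real r * cinner x y"
  by (simp add: scaleR_scaleC cinner_scaleC_right)

lemma cinner_scaleR_left: "cinner (r *\<^sub>R x) (y::'a::complex_inner) = complex_of_real r * cinner x y"
  by (simp add: scaleR_scaleC cinner_scaleC_left)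

lemma cinner_sum_right: "cinner x (\<Sum>i\<in>I. f i) = (\<Sum>i\<in>I. cinner x (f i::'a::complex_inner))"
  by (induction I rule: infinite_finite_induct) (auto simp: cinner_add_right)

lemma cinner_sum_left: "cinner (\<Sum>i\<in>I. f i) x = (\<Sum>i\<in>I. cinner (f i::'a::complex_inner) x)"
  by (induction I rule: infinite_finite_induct) (auto simp: cinner_add_left)

lemma Re_cinner_self: "Re (cinner x (x::'a::complex_inner)) = (norm x)\<^sup>2"
  by (metis Re_complex_of_real cinner_self_norm)

lemma cmod_cinner_self: "cmod (cinner x (x::'a::complex_inner)) = (norm x)\<^sup>2"
  unfolding cinner_self_norm norm_of_real by simp

lemma cinner_self_eq_0: "cinner x (x::'a::complex_inner) = 0 \<longleftrightarrow> x = 0"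
  by (simp add: cinner_self_norm)

lemma norm_add_square_cinner:
  "(norm ((x::'a::complex_inner) + y))\<^sup>2 = (norm x)\<^sup>2 + (norm y)\<^sup>2 + 2 * Re (cinner x y)"
proof -
  have "Re (cinner y x) = Re (cinner x y)" by (subst cinner_commute) simp
  then show ?thesis
    by (simp flip: Re_cinner_self add: cinner_add_left cinner_add_right)
qed

lemma norm_diff_square_cinner:
  "(norm ((x::'a::complex_inner) - y))\<^sup>2 = (norm x)\<^sup>2 + (norm y)\<^sup>2 - 2 * Re (cinner x y)"
  using norm_add_square_cinner[of x "-y"] by (simp add: cinner_minus_right)

lemma pythagoras_cinner:
  "cinner x (y::'a::complex_inner) = 0 \<Longrightarrow> (norm (x + y))\<^sup>2
      = (norm x)\<^sup>2 + (norm y)\<^sup>2"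
  by (simp add: norm_add_square_cinner)

lemma Re_cinner_le: "Re (cinner x (y::'a::complex_inner)) \<le> norm x * norm y"
proof (cases "norm x * norm y = 0")
  case False
  then have pos: "norm x * norm y > 0" by (simp add: less_le)
  have "0 \<le> (norm (norm y *\<^sub>R x - norm x *\<^sub>R y))\<^sup>2" by simp
  also have "\<dots> = (norm y)\<^sup>2 * (norm x)\<^sup>2
      + (norm x)\<^sup>2 * (norm y)\<^sup>2 - 2 * (norm x * norm y) * Re (cinner x y)"
    by (simp add: norm_diff_square_cinner cinner_scaleR_left cinner_scaleR_right power_mult_distrib)
  finally have "(norm x * norm y) * Re (cinner x y) \<le> (norm x * norm y) * (norm x * norm y)"
    by (simp add: power2_eq_square algebra_simps)
  then show ?thesis using mult_left_le_imp_le[OF _ pos] by blast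
qed auto

lemma cinner_Cauchy_Schwarz: "cmod (cinner x (y::'a::complex_inner)) \<le> norm x * norm y"
proof (cases "cinner x y = 0")
  case False
  define a where "a = cnj (cinner x y) / complex_of_real (cmod (cinner x y))"
  have a: "cmod a = 1" using False by (simp add: a_def norm_divide)
  have "cnj (cinner x y) * cinner x y = complex_of_real ((cmod (cinner x y))\<^sup>2)"
    by (subst complex_norm_square) (rule mult.commute)
  then have "cinner x (a *\<^sub>C y) = complex_of_real (cmod (cinner x y))"
    using False by (simp add: cinner_scaleC_right a_def power2_eq_square)
  then have "cmod (cinner x y) = Re (cinner x (a *\<^sub>C y))" by simp
  also have "\<dots> \<le> norm x * norm y" using Re_cinner_le[of x "a *\<^sub>C y"]
    by (simp add: norm_scaleC a)
  finally show ?thesis .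
qed simp

lemma bounded_bilinear_cinner:
  "bounded_bilinear (cinner :: 'a::complex_inner \<Rightarrow> 'a \<Rightarrow> complex)"
proof
  fix a a' b b' :: 'a and r :: real
  show "cinner (a + a') b = cinner a b + cinner a' b" by (rule cinner_add_left)
  show "cinner a (b + b') = cinner a b + cinner a b'" by (rule cinner_add_right)
  show "cinner (r *\<^sub>R a) b = r *\<^sub>R cinner a b"
    by (simp add: cinner_scaleR_left scaleR_conv_of_real)
  show "cinner a (r *\<^sub>R b) = r *\<^sub>R cinner a b"
    by (simp add: cinner_scaleR_right scaleR_conv_of_real)
  show "\<exists>K. \<forall>a b::'a. norm (cinner a b) \<le> norm a * norm b * K"
    using cinner_Cauchy_Schwarz by (metis mult.right_neutral)
qed

lemmas tendsto_cinner [tendsto_intros] = bounded_bilinear.tendsto[OF bounded_bilinear_cinner]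

lemma cinner_eq_zero_all: "(\<And>y. cinner y (x::'a::complex_inner) = 0) \<Longrightarrow> x = 0"
  using cinner_self_eq_0 by blast

lemma norm_le_if_cinner_le:
  assumes "\<And>u. cmod (cinner u (x::'a::complex_inner)) \<le> K * norm u" and "K \<ge> 0"
  shows "norm x \<le> K"
proof (cases "x = 0")
  case False
  have "norm x * norm x \<le> K * norm x"
    using assms(1)[of x] by (simp only: cmod_cinner_self power2_eq_square)
  then show ?thesis using False by simp
qed (use assms(2) in simp)

lemma pythagoras_sum_cinner:
  fixes f :: "'i \<Rightarrow> 'a::complex_inner"
  assumes "finite I" "\<And>i j. i \<in> I \<Longrightarrow> j \<in> I
      \<Longrightarrow> i \<noteq> j \<Longrightarrow> cinner (f i) (f j) = 0"
  shows "(norm (\<Sum>i\<in>I. f i))\<^sup>2 = (\<Sum>i\<in>I. (norm (f i))\<^sup>2)"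
  using assms
proof (induction I rule: finite_induct)
  case (insert a I)
  have "cinner (f a) (\<Sum>i\<in>I. f i) = 0"
    using insert.prems insert.hyps by (auto simp: cinner_sum_right intro!: sum.neutral)
  then show ?case using insert by (simp add: pythagoras_cinner)
qed simp

section \<open>Bounded complex-linear operators and their inverses\<close>

lemma bounded_linear_scaleC_blinfun:
  "bounded_linear (\<lambda>x. c *\<^sub>C blinfun_apply (A::'a::real_normed_vector
      \<Rightarrow>\<^sub>L 'b::complex_normed_vector) x)"
  using bounded_linear_compose[OF bounded_linear_scaleC[of c] blinfun.bounded_linear_right[of A]] by simp

lemma cscaleL_apply [simp]: "blinfun_apply (cscaleL c A) x = c *\<^sub>C blinfun_apply A x"
  unfolding cscaleL_def by (simp add: bounded_linear_Blinfun_apply[OF bounded_linear_scaleC_blinfun])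

lemma norm_cscaleL_le: "norm (cscaleL c A) \<le> cmod c * norm A"
  by (rule norm_blinfun_bound) (auto simp: norm_scaleC mult.assoc intro!: mult_left_mono norm_blinfun)

lemma clinear_opD: "clinear_op A \<Longrightarrow> blinfun_apply A (c *\<^sub>C x)
  = c *\<^sub>C blinfun_apply A x"
  by (simp add: clinear_op_def)

lemma clinear_op_id [simp]: "clinear_op (id_blinfun::'a::complex_normed_vector \<Rightarrow>\<^sub>L 'a)"
  by (simp add: clinear_op_def)

lemma clinear_op_zero [simp]:
  "clinear_op (0::'a::complex_normed_vector \<Rightarrow>\<^sub>L 'b::complex_normed_vector)"
  by (simp add: clinear_op_def)

lemma clinear_op_compose: "clinear_op A \<Longrightarrow> clinear_op B
  \<Longrightarrow> clinear_op (A o\<^sub>L B)"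
  by (simp add: clinear_op_def)

lemma clinear_op_add: "clinear_op A \<Longrightarrow> clinear_op B \<Longrightarrow> clinear_op (A + B)"
  by (simp add: clinear_op_def blinfun.add_left scaleC_add_right)

lemma clinear_op_diff: "clinear_op A \<Longrightarrow> clinear_op B \<Longrightarrow> clinear_op (A - B)"
  by (simp add: clinear_op_def blinfun.diff_left scaleC_diff_right)

lemma clinear_op_cscaleL: "clinear_op A \<Longrightarrow> clinear_op (cscaleL c A)"
  by (simp add: clinear_op_def scaleC_scaleC mult.commute)

lemma clinear_op_sum: "(\<And>i. i \<in> I \<Longrightarrow> clinear_op (A i))
  \<Longrightarrow> clinear_op (\<Sum>i\<in>I. A i)"
  by (induction I rule: infinite_finite_induct) (auto intro: clinear_op_add)

lemma blinfun_apply_shift: "blinfun_apply (H - cscaleL z id_blinfun) x = blinfun_apply H x - z *\<^sub>C x"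
  by (simp add: blinfun.diff_left)

lemma clinear_op_shift: "clinear_op H \<Longrightarrow> clinear_op (H - cscaleL z id_blinfun)"
  by (intro clinear_op_diff clinear_op_cscaleL clinear_op_id)

lemma blinfun_compose_eq_id_apply: "A o\<^sub>L B = id_blinfun
  \<Longrightarrow> blinfun_apply A (blinfun_apply B x) = x"
  by (metis blinfun_apply_blinfun_compose blinfun_apply_id_blinfun id_apply)

lemma inverse_op_unique:
  assumes "B o\<^sub>L A = id_blinfun" "A o\<^sub>L B = id_blinfun"
  shows "inverse_op A = B"
  unfolding inverse_op_def
proof (rule the_equality)
  fix C assume "C o\<^sub>L A = id_blinfun \<and> A o\<^sub>L C = id_blinfun"
  then have "blinfun_apply C (blinfun_apply A (blinfun_apply B x)) = blinfun_apply B x" for x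
    by (auto intro: blinfun_compose_eq_id_apply)
  then show "C = B" using blinfun_compose_eq_id_apply[OF assms(2)] by (auto intro: blinfun_eqI)
qed (use assms in blast)

lemma invertible_opI:
  assumes "\<And>x. blinfun_apply A (blinfun_apply B x)
      = x" "\<And>x. blinfun_apply B (blinfun_apply A x) = x"
  shows "invertible_op A" "inverse_op A = B"
proof -
  have "B o\<^sub>L A = id_blinfun" "A o\<^sub>L B = id_blinfun" by (auto intro!: blinfun_eqI simp: assms)
  then show "invertible_op A" "inverse_op A = B"
    unfolding invertible_op_def by (auto intro: inverse_op_unique)
qed

lemma inverse_op_compose:
  assumes "invertible_op A"
  shows "inverse_op A o\<^sub>L A = id_blinfun" "A o\<^sub>L inverse_op A = id_blinfun"
proof -
  obtain B where "B o\<^sub>L A = id_blinfun" "A o\<^sub>L B = id_blinfun"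
    using assms unfolding invertible_op_def by blast
  moreover from this have "inverse_op A = B" by (rule inverse_op_unique)
  ultimately show "inverse_op A o\<^sub>L A = id_blinfun" "A o\<^sub>L inverse_op A = id_blinfun"
    by simp_all
qed

lemma inverse_op_apply_left [simp]:
  "invertible_op A \<Longrightarrow> blinfun_apply (inverse_op A) (blinfun_apply A x) = x"
  using inverse_op_compose(1) blinfun_compose_eq_id_apply by blast

lemma inverse_op_apply_right [simp]:
  "invertible_op A \<Longrightarrow> blinfun_apply A (blinfun_apply (inverse_op A) x) = x"
  using inverse_op_compose(2) blinfun_compose_eq_id_apply by blast

lemma clinear_op_inverse:
  assumes "clinear_op A" "invertible_op A"
  shows "clinear_op (inverse_op A)"
  unfolding clinear_op_def
proof (intro allI)
  fix c x
  have "c *\<^sub>C x = blinfun_apply A (c *\<^sub>C blinfun_apply (inverse_op A) x)"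
    using assms by (simp add: clinear_opD)
  then show "blinfun_apply (inverse_op A) (c *\<^sub>C x) = c *\<^sub>C blinfun_apply (inverse_op A) x"
    using assms by simp
qed

lemma invertible_op_compose:
  assumes "invertible_op A" "invertible_op B"
  shows "invertible_op (A o\<^sub>L B)" "inverse_op (A o\<^sub>L B) = inverse_op B o\<^sub>L inverse_op A"
  using invertible_opI[of "A o\<^sub>L B" "inverse_op B o\<^sub>L inverse_op A"] assms by simp_all

lemma inverse_op_commute:
  assumes A: "invertible_op A"
    and commute: "\<And>y. blinfun_apply A (blinfun_apply B y) = blinfun_apply B (blinfun_apply A y)"
  shows "blinfun_apply (inverse_op A) (blinfun_apply B y)
      = blinfun_apply B (blinfun_apply (inverse_op A) y)"
proof -
  have "blinfun_apply B y = blinfun_apply A (blinfun_apply B (blinfun_apply (inverse_op A) y))"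
    using A by (simp add: commute)
  then show ?thesis using A by simp
qed

lemma not_invertible_op_if_approx_kernel:
  assumes "\<And>e. e > 0 \<Longrightarrow> \<exists>u. norm u = 1 \<and> norm (blinfun_apply A u) < e"
  shows "\<not> invertible_op A"
proof
  assume inv: "invertible_op A"
  define K where "K = norm (inverse_op A)"
  obtain u where u: "norm u = 1" "norm (blinfun_apply A u) < 1 / (K + 1)"
    using assms[of "1 / (K + 1)"] by (auto simp: K_def add_nonneg_pos)
  have "norm u \<le> K * norm (blinfun_apply A u)"
    using norm_blinfun[of "inverse_op A" "blinfun_apply A u"] inv by (simp add: K_def)
  also have "\<dots> \<le> K * (1 / (K + 1))" using u(2) by (intro mult_left_mono) (auto simp: K_def)
  also have "\<dots> < 1"
    using norm_ge_zero[of "inverse_op A"] unfolding K_def[symmetric] by (simp add: divide_less_eq)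
  finally show False using u(1) by simp
qed

lemma invertible_op_id_minus:
  fixes A :: "'a::{complex_normed_vector, complete_space} \<Rightarrow>\<^sub>L 'a"
  assumes A_small: "norm A < 1"
  shows "invertible_op (id_blinfun - A)" "norm (inverse_op (id_blinfun - A)) \<le> 1 / (1 - norm A)"
proof -
  have ex: "\<exists>!y. x + blinfun_apply A y = y" for x
  proof (rule banach_fix_type[of "norm A"])
    show "\<forall>u v. dist (x + blinfun_apply A u) (x + blinfun_apply A v) \<le> norm A * dist u v"
      by (auto simp: dist_norm blinfun.diff_right[symmetric] norm_blinfun)
  qed (use A_small in auto)
  define S where "S x = (THE y. x + blinfun_apply A y = y)" for x
  have S_fix: "x + blinfun_apply A (S x) = S x" for x
    unfolding S_def using theI'[OF ex[of x]] by simp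
  have S_unique: "x + blinfun_apply A y = y \<Longrightarrow> S x = y" for x y
    using ex[of x] S_fix[of x] by blast
  have S_add: "S (x + y) = S x + S y" for x y
    by (rule S_unique) (metis S_fix add.assoc add.left_commute blinfun.add_right)
  have S_scaleR: "S (r *\<^sub>R x) = r *\<^sub>R S x" for r x
    by (rule S_unique) (metis S_fix blinfun.scaleR_right scaleR_add_right)
  have S_norm: "norm (S x) \<le> norm x * (1 / (1 - norm A))" for x
  proof -
    have "norm (S x) \<le> norm x + norm A * norm (S x)"
        using S_fix[of x] norm_triangle_ineq[of x "blinfun_apply A (S x)"] norm_blinfun[of A "S x"]
      by simp
    then have "(1 - norm A) * norm (S x) \<le> norm x" by (simp add: algebra_simps)
    then show ?thesis using A_small by (simp add: field_simps)
  qed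
  have S_linear: "bounded_linear S"
    by (rule bounded_linear_intro[OF S_add S_scaleR S_norm])
  have inverse_right: "\<And>x. blinfun_apply (id_blinfun - A) (blinfun_apply (Blinfun S) x) = x"
    using S_fix by (simp add: bounded_linear_Blinfun_apply[OF S_linear] blinfun.diff_left algebra_simps)
  have inverse_left: "\<And>x. blinfun_apply (Blinfun S) (blinfun_apply (id_blinfun - A) x) = x"
    by (simp add: bounded_linear_Blinfun_apply[OF S_linear] blinfun.diff_left) (rule S_unique, simp)
  show "invertible_op (id_blinfun - A)" using invertible_opI(1)[OF inverse_right inverse_left] .
  have inv: "inverse_op (id_blinfun - A) = Blinfun S"
    using invertible_opI(2)[OF inverse_right inverse_left] .
  have "norm (Blinfun S) \<le> 1 / (1 - norm A)"
    by (rule norm_blinfun_bound)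
      (use A_small S_norm in \<open>auto simp: bounded_linear_Blinfun_apply[OF S_linear]
          mult.commute\<close>)
  then show "norm (inverse_op (id_blinfun - A)) \<le> 1 / (1 - norm A)" using inv by simp
qed

section \<open>Resolvents\<close>

lemma shift_resolvent_apply: "z \<notin> op_spectrum H \<Longrightarrow>
   blinfun_apply H (blinfun_apply (resolvent H z) x) - z *\<^sub>C blinfun_apply (resolvent H z) x = x"
  using inverse_op_apply_right[of "H - cscaleL z id_blinfun" x]
    by (simp add: resolvent_def op_spectrum_def blinfun_apply_shift)

lemma resolvent_shift_apply: "z \<notin> op_spectrum H \<Longrightarrow>
   blinfun_apply (resolvent H z) (blinfun_apply H x - z *\<^sub>C x) = x"
  using inverse_op_apply_left[of "H - cscaleL z id_blinfun" x]
    by (simp add: resolvent_def op_spectrum_def blinfun_apply_shift)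

lemma clinear_op_resolvent: "clinear_op H \<Longrightarrow> z \<notin> op_spectrum H
  \<Longrightarrow> clinear_op (resolvent H z)"
  unfolding resolvent_def by (rule clinear_op_inverse) (auto simp: op_spectrum_def clinear_op_shift)

lemma resolvent_identity:
  assumes H: "clinear_op H" and z: "z \<notin> op_spectrum H" and w: "w \<notin> op_spectrum H"
  shows "blinfun_apply (resolvent H w) x - blinfun_apply (resolvent H z) x
       = (w - z) *\<^sub>C blinfun_apply (resolvent H w) (blinfun_apply (resolvent H z) x)"
proof -
  define y where "y = blinfun_apply (resolvent H z) x"
  have x: "x = blinfun_apply H y - z *\<^sub>C y" using shift_resolvent_apply[OF z] y_def by simp
  have x2: "x = (blinfun_apply H y - w *\<^sub>C y) + (w - z) *\<^sub>C y"
    by (subst x) (simp add: scaleC_diff_left algebra_simps)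
  have "blinfun_apply (resolvent H w) x
      = blinfun_apply (resolvent H w) (blinfun_apply H y - w *\<^sub>C y)
          + blinfun_apply (resolvent H w) ((w - z) *\<^sub>C y)"
    by (subst x2) (rule blinfun.add_right)
  also have "\<dots> = y + (w - z) *\<^sub>C blinfun_apply (resolvent H w) y"
    using resolvent_shift_apply[OF w] clinear_opD[OF clinear_op_resolvent[OF H w]] by simp
  finally show ?thesis unfolding y_def by simp
qed

lemma shift_eq_shift_compose:
  assumes H: "clinear_op H" and z: "z \<notin> op_spectrum H"
  shows "H - cscaleL w id_blinfun
    = (H - cscaleL z id_blinfun) o\<^sub>L (id_blinfun - cscaleL (w - z) (resolvent H z))"
proof (rule blinfun_eqI)
  fix y
  have "blinfun_apply ((H - cscaleL z id_blinfun) o\<^sub>L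
        (id_blinfun - cscaleL (w - z) (resolvent H z))) y
      = blinfun_apply H y - z *\<^sub>C y - (w - z) *\<^sub>C (blinfun_apply H
          (blinfun_apply (resolvent H z) y)
        - z *\<^sub>C blinfun_apply (resolvent H z) y)"
    using clinear_opD[OF clinear_op_shift[OF H, of z]]
    by (simp add: blinfun.diff_left blinfun.diff_right blinfun_apply_shift)
  also have "\<dots> = blinfun_apply (H - cscaleL w id_blinfun) y"
    by (simp add: shift_resolvent_apply[OF z] blinfun_apply_shift scaleC_diff_left algebra_simps)
  finally show "blinfun_apply (H - cscaleL w id_blinfun) y
      = blinfun_apply ((H - cscaleL z id_blinfun) o\<^sub>L (id_blinfun - cscaleL (w - z)
          (resolvent H z))) y"
    by simp
qed

lemma resolvent_perturbation:
  fixes H :: "'a::{complex_normed_vector,complete_space} \<Rightarrow>\<^sub>L 'a"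
  assumes H: "clinear_op H" and z: "z \<notin> op_spectrum H"
    and small: "cmod (w - z) * norm (resolvent H z) < 1"
  shows "w \<notin> op_spectrum H"
    "norm (resolvent H w) \<le> norm (resolvent H z) / (1 - cmod (w - z) * norm (resolvent H z))"
proof -
  define R where "R = resolvent H z"
  define A where "A = cscaleL (w - z) R"
  have A_le: "norm A \<le> cmod (w - z) * norm R" unfolding A_def by (rule norm_cscaleL_le)
  with small have A_small: "norm A < 1" by (simp add: R_def)
  have inv_A: "invertible_op (id_blinfun - A)" using invertible_op_id_minus(1)[OF A_small] .
  have inv_z: "invertible_op (H - cscaleL z id_blinfun)" using z by (simp add: op_spectrum_def)
  have eq: "H - cscaleL w id_blinfun = (H - cscaleL z id_blinfun) o\<^sub>L (id_blinfun - A)"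
    unfolding A_def R_def by (rule shift_eq_shift_compose[OF H z])
  show "w \<notin> op_spectrum H"
    using invertible_op_compose(1)[OF inv_z inv_A] by (simp add: op_spectrum_def eq)
  have "resolvent H w = inverse_op (id_blinfun - A) o\<^sub>L R"
    unfolding resolvent_def eq R_def by (rule invertible_op_compose(2)[OF inv_z inv_A])
  then have "norm (resolvent H w) \<le> norm (inverse_op (id_blinfun - A)) * norm R"
    by (simp add: norm_blinfun_compose)
  also have "\<dots> \<le> 1 / (1 - norm A) * norm R"
    by (rule mult_right_mono[OF invertible_op_id_minus(2)[OF A_small]]) simp
  also have "\<dots> \<le> 1 / (1 - cmod (w - z) * norm R) * norm R"
    using A_le A_small small by (intro mult_right_mono divide_left_mono) (auto simp: R_def)
  finally show "norm (resolvent H w) \<le> norm (resolvent H z) / (1 - cmod (w - z) * norm (resolvent H z))"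
    by (simp add: R_def)
qed

lemma open_resolvent_set:
  fixes H :: "'a::{complex_normed_vector,complete_space} \<Rightarrow>\<^sub>L 'a"
  assumes H: "clinear_op H" shows "open (- op_spectrum H)"
proof (rule openI)
  fix z assume z: "z \<in> - op_spectrum H"
  define N where "N = norm (resolvent H z)"
  define e where "e = 1 / (N + 1)"
  have N0: "N \<ge> 0" by (simp add: N_def)
  have e0: "e > 0" using N0 by (simp add: e_def)
  moreover have "ball z e \<subseteq> - op_spectrum H"
  proof
    fix w assume "w \<in> ball z e"
    then have d: "cmod (w - z) < e" by (simp add: dist_norm norm_minus_commute)
    have "cmod (w - z) * N \<le> e * N" using d N0 by (simp add: mult_right_mono)
    also have "e * N < 1" using N0 by (simp add: e_def field_simps)
    finally show "w \<in> - op_spectrum H" using resolvent_perturbation(1)[OF H] z N_def by auto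
  qed
  ultimately show "\<exists>e>0. ball z e \<subseteq> - op_spectrum H" by blast
qed

lemma norm_resolvent_diff_le:
  assumes H: "clinear_op H" and z: "z \<notin> op_spectrum H" and w: "w \<notin> op_spectrum H"
  shows "norm (resolvent H w - resolvent H z)
      \<le> cmod (w - z) * norm (resolvent H w) * norm (resolvent H z)"
proof (rule norm_blinfun_bound)
  fix x
  have "norm (blinfun_apply (resolvent H w - resolvent H z) x)
      = cmod (w - z) * norm (blinfun_apply (resolvent H w) (blinfun_apply (resolvent H z) x))"
    by (simp add: blinfun.diff_left resolvent_identity[OF H z w] norm_scaleC)
  also have "\<dots> \<le> cmod (w - z) * (norm (resolvent H w) * (norm (resolvent H z) * norm x))"
    by (intro mult_left_mono order_trans[OF norm_blinfun] mult_left_mono norm_blinfun) auto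
  finally show "norm (blinfun_apply (resolvent H w - resolvent H z) x)
      \<le> cmod (w - z) * norm (resolvent H w) * norm (resolvent H z) * norm x"
    by (simp add: mult.assoc)
qed simp

lemma resolvent_tendsto:
  fixes H :: "'a::{complex_normed_vector,complete_space} \<Rightarrow>\<^sub>L 'a"
  assumes H: "clinear_op H" and z: "z \<notin> op_spectrum H"
  shows "((\<lambda>w. resolvent H w) \<longlongrightarrow> resolvent H z) (at z)"
proof -
  define N where "N = norm (resolvent H z)"
  have N0: "N \<ge> 0" by (simp add: N_def)
  have "((\<lambda>w. cmod (w - z) * N) \<longlongrightarrow> 0) (at z)"
    by (auto intro!: tendsto_eq_intros)
  then have ev: "eventually (\<lambda>w. cmod (w - z) * N < 1/2) (at z)"
    by (rule order_tendstoD) simp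
  have "eventually (\<lambda>w. norm (resolvent H w - resolvent H z)
      \<le> cmod (w - z) * (2 * N * N)) (at z)"
    using ev
  proof eventually_elim
    case (elim w)
    have R_small: "cmod (w - z) * norm (resolvent H z) < 1" using elim N_def by simp
    have w: "w \<notin> op_spectrum H" using resolvent_perturbation(1)[OF H z R_small] .
    have nw: "norm (resolvent H w) \<le> N / (1 - cmod (w - z) * N)"
      using resolvent_perturbation(2)[OF H z R_small] N_def by simp
    also have "\<dots> \<le> N / (1/2)"
    proof (rule divide_left_mono[OF _ N0])
      show "1/2 \<le> 1 - cmod (w - z) * N" using elim by simp
      show "0 < (1 - cmod (w - z) * N) * (1/2)" using elim by simp
    qed
    also have "\<dots> = 2 * N" by simp
    finally have nw2: "norm (resolvent H w) \<le> 2 * N" .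
    have "norm (resolvent H w - resolvent H z) \<le> cmod (w - z) * norm (resolvent H w) * N"
      using norm_resolvent_diff_le[OF H z w] N_def by simp
    also have "\<dots> \<le> cmod (w - z) * (2 * N) * N"
      by (intro mult_right_mono mult_left_mono nw2) (auto simp: N0)
    finally show ?case by (simp add: mult.assoc)
  qed
  moreover have "((\<lambda>w. cmod (w - z) * (2 * N * N)) \<longlongrightarrow> 0) (at z)"
    by (auto intro!: tendsto_eq_intros)
  ultimately have "((\<lambda>w. resolvent H w - resolvent H z) \<longlongrightarrow> 0) (at z)"
    by (rule Lim_null_comparison)
  then show ?thesis by (simp add: LIM_zero_iff)
qed

lemma holomorphic_resolvent_coeff:
  fixes H A :: "'a::{complex_inner,complete_space} \<Rightarrow>\<^sub>L 'a"
  assumes H: "clinear_op H" and A: "clinear_op A" and S: "open S" "S \<inter> op_spectrum H = {}"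
  shows "(\<lambda>z. cinner a (blinfun_apply A (blinfun_apply (resolvent H z) b))) holomorphic_on S"
  unfolding holomorphic_on_open[OF S(1)]
proof
  fix z assume zS: "z \<in> S"
  then have z: "z \<notin> op_spectrum H" using S by auto
  define f where "f w = cinner a (blinfun_apply A (blinfun_apply (resolvent H w) b))" for w
  have lim: "((\<lambda>w. cinner a (blinfun_apply A (blinfun_apply (resolvent H w) (blinfun_apply
      (resolvent H z) b))))
      \<longlongrightarrow> cinner a (blinfun_apply A (blinfun_apply (resolvent H z) (blinfun_apply
          (resolvent H z) b)))) (at z)"
    by (intro tendsto_intros resolvent_tendsto[OF H z])
  have ev: "eventually (\<lambda>w. cinner a (blinfun_apply A (blinfun_apply (resolvent H w)
      (blinfun_apply (resolvent H z) b)))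
      = (f w - f z) / (w - z)) (at z)"
    using eventually_at_in_open[OF S(1) zS]
  proof eventually_elim
    case (elim w)
    then have w: "w \<notin> op_spectrum H" and wz: "w \<noteq> z" using S by auto
    have "f w - f z = cinner a (blinfun_apply A (blinfun_apply (resolvent H w) b - blinfun_apply
        (resolvent H z) b))"
      by (simp add: f_def cinner_diff_right blinfun.diff_right)
    also have "\<dots>
        = (w - z) * cinner a (blinfun_apply A (blinfun_apply (resolvent H w) (blinfun_apply
        (resolvent H z) b)))"
      by (simp add: resolvent_identity[OF H z w] clinear_opD[OF A] cinner_scaleC_right)
    finally show ?case using wz by simp
  qed
  have "(f has_field_derivative cinner a (blinfun_apply A (blinfun_apply (resolvent H z)
      (blinfun_apply (resolvent H z) b)))) (at z)"
    unfolding has_field_derivative_iff by (rule Lim_transform_eventually[OF lim ev])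
  then show "\<exists>f'. ((\<lambda>z. cinner a (blinfun_apply A (blinfun_apply (resolvent H z)
      b))) has_field_derivative f') (at z)"
    unfolding f_def by blast
qed

lemma holomorphic_resolvent_sandwich_coeff:
  fixes H B :: "'a::{complex_inner,complete_space} \<Rightarrow>\<^sub>L 'a"
  assumes H: "clinear_op H" and B: "clinear_op B" and S: "open S" "S \<inter> op_spectrum H = {}"
  shows "(\<lambda>z. cinner a (blinfun_apply (resolvent H z) (blinfun_apply B (blinfun_apply
      (resolvent H z) b)))) holomorphic_on S"
  unfolding holomorphic_on_open[OF S(1)]
proof
  fix z assume zS: "z \<in> S"
  then have z: "z \<notin> op_spectrum H" using S by auto
  define R where "R w = resolvent H w" for w
  define f where "f w = cinner a (blinfun_apply (R w) (blinfun_apply B (blinfun_apply (R w) b)))" for w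
  define g where "g w
      = cinner a (blinfun_apply (R w) (blinfun_apply (R z) (blinfun_apply B (blinfun_apply (R w) b)))
       + blinfun_apply (R z) (blinfun_apply B (blinfun_apply (R w) (blinfun_apply (R z) b))))" for w
  have lim: "(g \<longlongrightarrow> g z) (at z)"
    unfolding g_def R_def by (intro tendsto_intros resolvent_tendsto[OF H z])
  have ev: "eventually (\<lambda>w. g w = (f w - f z) / (w - z)) (at z)"
    using eventually_at_in_open[OF S(1) zS]
  proof eventually_elim
    case (elim w)
    then have w: "w \<notin> op_spectrum H" and wz: "w \<noteq> z" using S by auto
    have Rz: "clinear_op (R z)" unfolding R_def by (rule clinear_op_resolvent[OF H z])
    have d1: "blinfun_apply (R w) y - blinfun_apply (R z) y
        = (w - z) *\<^sub>C blinfun_apply (R w) (blinfun_apply (R z) y)" for y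
      unfolding R_def by (rule resolvent_identity[OF H z w])
    have "blinfun_apply (R w) (blinfun_apply B (blinfun_apply (R w) b)) - blinfun_apply (R z)
        (blinfun_apply B (blinfun_apply (R z) b))
        = (blinfun_apply (R w) (blinfun_apply B (blinfun_apply (R w) b)) - blinfun_apply (R z)
            (blinfun_apply B (blinfun_apply (R w) b)))
          + blinfun_apply (R z) (blinfun_apply B (blinfun_apply (R w) b - blinfun_apply (R z) b))"
      by (simp add: blinfun.diff_right)
    also have "\<dots>
        = (w - z) *\<^sub>C (blinfun_apply (R w) (blinfun_apply (R z) (blinfun_apply B
        (blinfun_apply (R w) b)))
       + blinfun_apply (R z) (blinfun_apply B (blinfun_apply (R w) (blinfun_apply (R z) b))))"
      by (simp add: d1 clinear_opD[OF B] clinear_opD[OF Rz] scaleC_add_right)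
    finally have "f w - f z = (w - z) * g w"
      by (simp add: f_def g_def cinner_diff_right[symmetric] cinner_scaleC_right)
    then show ?case using wz by simp
  qed
  have "(f has_field_derivative g z) (at z)"
    unfolding has_field_derivative_iff by (rule Lim_transform_eventually[OF lim ev])
  then show "\<exists>f'. ((\<lambda>z. cinner a (blinfun_apply (resolvent H z) (blinfun_apply B
      (blinfun_apply (resolvent H z) b)))) has_field_derivative f') (at z)"
    unfolding f_def R_def by blast
qed

section \<open>Orthogonal projections onto closed subspaces\<close>

definition csubspace :: "'a::complex_vector set \<Rightarrow> bool" where
  "csubspace M \<longleftrightarrow> 0 \<in> M \<and> (\<forall>x\<in>M. \<forall>y\<in>M. x + y
      \<in> M) \<and> (\<forall>c. \<forall>x\<in>M. c *\<^sub>C x \<in> M)"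

lemma csubspace_0: "csubspace M \<Longrightarrow> 0 \<in> M"
  by (simp add: csubspace_def)

lemma csubspace_add: "csubspace M \<Longrightarrow> x \<in> M \<Longrightarrow> y \<in> M
  \<Longrightarrow> x + y \<in> M"
  by (simp add: csubspace_def)

lemma csubspace_scaleC: "csubspace M \<Longrightarrow> x \<in> M \<Longrightarrow> c *\<^sub>C x \<in> M"
  by (simp add: csubspace_def)

lemma csubspace_scaleR: "csubspace M \<Longrightarrow> x \<in> M \<Longrightarrow> r *\<^sub>R x \<in> M"
  by (simp add: csubspace_def scaleR_scaleC)

lemma csubspace_diff: "csubspace M \<Longrightarrow> x \<in> M \<Longrightarrow> y \<in> M
  \<Longrightarrow> x - y \<in> M"
  using csubspace_add[of M x "-y"] csubspace_scaleR[of M y "-1"] by simp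

lemma csubspace_closure:
  assumes S: "csubspace (S::'a::complex_normed_vector set)"
  shows "csubspace (closure S)"
  unfolding csubspace_def
proof (intro conjI ballI allI)
  show "0 \<in> closure S" using csubspace_0[OF S] closure_subset by blast
next
  fix x y assume "x \<in> closure S" "y \<in> closure S"
  then obtain f g where "\<And>n. f n \<in> S" "f \<longlonglongrightarrow> x" "\<And>n. g n
      \<in> S" "g \<longlonglongrightarrow> y"
    unfolding closure_sequential by blast
  then show "x + y \<in> closure S" unfolding closure_sequential
    by (intro exI[of _ "\<lambda>n. f n + g n"]) (auto intro: tendsto_intros csubspace_add[OF S])
next
  fix c x assume "x \<in> closure S"
  then obtain f where "\<And>n. f n \<in> S" "f \<longlonglongrightarrow> x"
    unfolding closure_sequential by blast
  then show "c *\<^sub>C x \<in> closure S" unfolding closure_sequential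
    by (intro exI[of _ "\<lambda>n. c *\<^sub>C f n"])
      (auto intro: bounded_linear.tendsto[OF bounded_linear_scaleC] csubspace_scaleC[OF S])
qed

lemma csubspace_range: "clinear_op A \<Longrightarrow> csubspace (range (blinfun_apply A))"
  unfolding csubspace_def
  by (auto simp flip: blinfun.add_right clinear_opD intro: range_eqI[of _ _ 0])

lemma csubspace_kernel: "clinear_op A \<Longrightarrow> csubspace {x. blinfun_apply A x = 0}"
  by (auto simp: csubspace_def blinfun.add_right clinear_opD)

lemma closed_kernel: "closed {x. blinfun_apply A x = 0}"
  by (intro closed_Collect_eq continuous_intros)

lemma parallelogram_law_cinner:
  "(norm ((a::'a::complex_inner) + b))\<^sup>2 + (norm (a - b))\<^sup>2 = 2 * (norm a)\<^sup>2
      + 2 * (norm b)\<^sup>2"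
  by (simp add: norm_add_square_cinner norm_diff_square_cinner)

lemma Re_cinner_eq_0_if_norm_le:
  assumes "\<And>t::real. (norm (e::'a::complex_inner))\<^sup>2 \<le> (norm (e - t *\<^sub>R m))\<^sup>2"
  shows "Re (cinner e m) = 0"
proof (cases "m = 0")
  case False
  define r where "r = Re (cinner e m)"
  define n where "n = (norm m)\<^sup>2"
  have n: "n > 0" using False by (simp add: n_def)
  have "(norm (e - t *\<^sub>R m))\<^sup>2 = (norm e)\<^sup>2 + t\<^sup>2 * n - 2 * t * r" for t
    by (simp add: norm_diff_square_cinner cinner_scaleR_right n_def r_def power_mult_distrib)
  then have "0 \<le> (r / n)\<^sup>2 * n - 2 * (r / n) * r" using assms[of "r / n"] by simp
  also have "\<dots> = - (r\<^sup>2 / n)" using n by (simp add: power2_eq_square field_simps)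
  finally have "r\<^sup>2 \<le> 0" using n by (simp add: divide_le_0_iff)
  then show ?thesis by (simp add: r_def)
qed simp

lemma cinner_eq_0_if_nearest:
  assumes M: "csubspace M" and nearest: "\<And>m. m \<in> M
      \<Longrightarrow> norm (e::'a::complex_inner) \<le> norm (e - m)"
    and m: "m \<in> M"
  shows "cinner m e = 0"
proof -
  have "Re (cinner e m) = 0"
    by (rule Re_cinner_eq_0_if_norm_le)
      (use nearest csubspace_scaleR[OF M m] in \<open>auto intro: power_mono\<close>)
  moreover have "Re (cinner e (\<i> *\<^sub>C m)) = 0"
    by (rule Re_cinner_eq_0_if_norm_le)
      (use nearest csubspace_scaleR[OF M csubspace_scaleC[OF M m]] in \<open>auto intro: power_mono\<close>)
  ultimately have "cinner e m = 0"
    by (simp add: cinner_scaleC_right complex_eq_iff)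
  then show ?thesis by (subst cinner_commute) simp
qed

text \<open>The parallelogram law makes every minimizing sequence for the distance to a
  subspace a Cauchy sequence.\<close>

lemma minimizing_sequence_Cauchy:
  fixes M :: "'a::complex_inner set"
  assumes M: "csubspace M" and d: "d \<ge> 0" "\<And>m. m \<in> M \<Longrightarrow> d \<le> norm (x - m)"
    and s: "\<And>n. s n \<in> M" "\<And>n. (norm (x - s n))\<^sup>2 \<le> d\<^sup>2 + 1 / Suc n"
  shows "Cauchy s"
proof (rule metric_CauchyI)
  have close: "(norm (s n - s k))\<^sup>2 \<le> 2 / Suc n + 2 / Suc k" for n k
  proof -
    have "(1/2) *\<^sub>R (s n + s k) \<in> M" using M s by (intro csubspace_scaleR csubspace_add) auto
    then have "d \<le> norm (x - (1/2) *\<^sub>R (s n + s k))" by (rule d(2))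
    moreover have "(x - s n) + (x - s k) = 2 *\<^sub>R (x - (1/2) *\<^sub>R (s n + s k))"
      by (simp add: algebra_simps scaleR_2)
    ultimately have "(2 * d)\<^sup>2 \<le> (norm ((x - s n) + (x - s k)))\<^sup>2"
      using d(1) by (intro power_mono) auto
    moreover have "norm (s k - s n) = norm (s n - s k)" by (rule norm_minus_commute)
    ultimately show ?thesis
      using parallelogram_law_cinner[of "x - s n" "x - s k"] s(2)[of n] s(2)[of k]
      by (simp add: power_mult_distrib)
  qed
  fix e :: real assume e: "e > 0"
  obtain N :: nat where "4 / e\<^sup>2 < N" using reals_Archimedean2 by blast
  then have "4 / e\<^sup>2 < Suc N" by simp
  then have "4 / Suc N < e\<^sup>2" using e by (simp add: field_simps)
  have "dist (s m) (s n) < e" if "N \<le> m" "N \<le> n" for m n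
  proof -
    have "(dist (s m) (s n))\<^sup>2 \<le> 2 / Suc m + 2 / Suc n" using close[of m n]
      by (simp add: dist_norm)
    also have "\<dots> \<le> 2 / Suc N + 2 / Suc N" using that by (intro add_mono divide_left_mono) auto
    also have "\<dots> < e\<^sup>2" using \<open>4 / Suc N < e\<^sup>2\<close> by simp
    finally show ?thesis using e by (meson power_less_imp_less_base less_imp_le)
  qed
  then show "\<exists>N. \<forall>m\<ge>N. \<forall>n\<ge>N. dist (s m) (s n) < e" by blast
qed

lemma nearest_point_csubspace_exists:
  fixes M :: "'a::{complex_inner,complete_space} set"
  assumes M: "csubspace M" "closed M"
  shows "\<exists>p\<in>M. \<forall>m\<in>M. norm (x - p) \<le> norm (x - m)"
proof -
  define d where "d = (INF m\<in>M. norm (x - m))"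
  have M_ne: "M \<noteq> {}" using csubspace_0[OF M(1)] by blast
  have bdd: "bdd_below ((\<lambda>m. norm (x - m)) ` M)" by (rule bdd_belowI[of _ 0]) auto
  have d_le: "d \<le> norm (x - m)" if "m \<in> M" for m unfolding d_def by (rule cINF_lower[OF bdd that])
  have d0: "d \<ge> 0" unfolding d_def by (rule cINF_greatest[OF M_ne]) simp
  have "\<exists>m\<in>M. norm (x - m) < sqrt (d\<^sup>2 + 1 / Suc n)" for n :: nat
  proof -
    have "d < sqrt (d\<^sup>2 + 1 / Suc n)" using d0 by (simp add: real_less_rsqrt)
    then show ?thesis unfolding d_def using cINF_less_iff[OF M_ne bdd] by simp
  qed
  then obtain s where s: "\<And>n. s n \<in> M" and s_near: "\<And>n. norm (x - s n)
      < sqrt (d\<^sup>2 + 1 / Suc n)"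
    by metis
  have "(norm (x - s n))\<^sup>2 \<le> d\<^sup>2 + 1 / Suc n" for n
    using power_strict_mono[OF s_near[of n] norm_ge_zero, of 2] by simp
  then have "Cauchy s" by (intro minimizing_sequence_Cauchy[OF M(1) d0 d_le s]) auto
  then obtain p where p: "s \<longlonglongrightarrow> p" using Cauchy_convergent_iff convergent_def by blast
  have "(\<lambda>n. sqrt (d\<^sup>2 + 1 / Suc n)) \<longlonglongrightarrow> sqrt (d\<^sup>2 + 0)"
    using LIMSEQ_inverse_real_of_nat by (intro tendsto_intros) (simp add: inverse_eq_divide)
  then have upper: "(\<lambda>n. sqrt (d\<^sup>2 + 1 / Suc n)) \<longlonglongrightarrow> d" using d0 by simp
  have "(\<lambda>n. norm (x - s n)) \<longlonglongrightarrow> d"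
  proof (rule real_tendsto_sandwich[OF _ _ tendsto_const upper])
    show "\<forall>\<^sub>F n in sequentially. d \<le> norm (x - s n)" using d_le s by simp
    show "\<forall>\<^sub>F n in sequentially. norm (x - s n) \<le> sqrt (d\<^sup>2 + 1 / Suc n)"
      using s_near by (simp add: less_imp_le)
  qed
  moreover have "(\<lambda>n. norm (x - s n)) \<longlonglongrightarrow> norm (x - p)"
    by (intro tendsto_intros p)
  ultimately have "norm (x - p) = d" by (rule LIMSEQ_unique[rotated])
  moreover have "p \<in> M" using closed_sequentially[OF M(2) s p] .
  ultimately show ?thesis using d_le by auto
qed

lemma orthogonal_projection_exists:
  fixes M :: "'a::{complex_inner,complete_space} set"
  assumes M: "csubspace M" "closed M"
  shows "\<exists>p\<in>M. \<forall>m\<in>M. cinner m (x - p) = 0"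
proof -
  obtain p where p: "p \<in> M" and nearest: "\<And>m. m \<in> M
      \<Longrightarrow> norm (x - p) \<le> norm (x - m)"
    using nearest_point_csubspace_exists[OF M] by blast
  have "cinner m (x - p) = 0" if "m \<in> M" for m
  proof (rule cinner_eq_0_if_nearest[OF M(1) _ that])
    fix m' assume "m' \<in> M"
    then show "norm (x - p) \<le> norm (x - p - m')"
      using nearest[of "p + m'"] csubspace_add[OF M(1) p] by (simp add: algebra_simps)
  qed
  then show ?thesis using p by blast
qed


definition proj :: "'a::complex_inner set \<Rightarrow> 'a \<Rightarrow> 'a" where
  "proj M x = (SOME p. p \<in> M \<and> (\<forall>m\<in>M. cinner m (x - p) = 0))"

context
  fixes M :: "'a::{complex_inner,complete_space} set"
  assumes M: "csubspace M" "closed M"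
begin

lemma proj_in: "proj M x \<in> M"
  and proj_orthogonal: "m \<in> M \<Longrightarrow> cinner m (x - proj M x) = 0"
proof -
  have "\<exists>p. p \<in> M \<and> (\<forall>m\<in>M. cinner m (x - p) = 0)"
    using orthogonal_projection_exists[OF M] by blast
  then have "proj M x \<in> M \<and> (\<forall>m\<in>M. cinner m (x - proj M x) = 0)"
    unfolding proj_def by (rule someI_ex)
  then show "proj M x \<in> M" "m \<in> M \<Longrightarrow> cinner m (x - proj M x) = 0" by auto
qed

lemma proj_unique:
  assumes p: "p \<in> M" and o: "\<And>m. m \<in> M \<Longrightarrow> cinner m (x - p) = 0"
  shows "proj M x = p"
proof -
  define q where "q = proj M x"
  have qM: "q \<in> M" and oq: "\<And>m. m \<in> M \<Longrightarrow> cinner m (x - q) = 0"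
    using proj_in proj_orthogonal unfolding q_def by auto
  have d: "p - q \<in> M" using csubspace_diff[OF M(1) p qM] .
  have "cinner (p - q) (p - q) = cinner (p - q) (x - q) - cinner (p - q) (x - p)"
    by (simp add: cinner_diff_right)
  also have "\<dots> = 0" using oq[OF d] o[OF d] by simp
  finally show ?thesis unfolding q_def[symmetric] by (simp add: cinner_self_eq_0)
qed

lemma proj_add: "proj M (x + y) = proj M x + proj M y"
proof (rule proj_unique)
  show "proj M x + proj M y \<in> M" by (intro csubspace_add[OF M(1)] proj_in)
  fix m assume m: "m \<in> M"
  have "x + y - (proj M x + proj M y) = (x - proj M x) + (y - proj M y)" by simp
  then have "cinner m (x + y - (proj M x + proj M y)) = cinner m (x - proj M x) + cinner m (y - proj M y)"
    by (simp only: cinner_add_right)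
  then show "cinner m (x + y - (proj M x + proj M y)) = 0"
    by (simp add: proj_orthogonal[OF m])
qed

lemma proj_scaleC: "proj M (c *\<^sub>C x) = c *\<^sub>C proj M x"
proof (rule proj_unique)
  show "c *\<^sub>C proj M x \<in> M" by (intro csubspace_scaleC[OF M(1)] proj_in)
  fix m assume m: "m \<in> M"
  have "c *\<^sub>C x - c *\<^sub>C proj M x = c *\<^sub>C (x - proj M x)" by (simp add: scaleC_diff_right)
  then show "cinner m (c *\<^sub>C x - c *\<^sub>C proj M x) = 0"
    using proj_orthogonal[OF m] by (simp add: cinner_scaleC_right)
qed

lemma proj_pythagoras: "(norm x)\<^sup>2 = (norm (proj M x))\<^sup>2 + (norm (x - proj M x))\<^sup>2"
proof -
  have "x = proj M x + (x - proj M x)" by simp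
  then have "(norm x)\<^sup>2 = (norm (proj M x + (x - proj M x)))\<^sup>2" by simp
  also have "\<dots> = (norm (proj M x))\<^sup>2 + (norm (x - proj M x))\<^sup>2"
    by (rule pythagoras_cinner) (rule proj_orthogonal[OF proj_in])
  finally show ?thesis .
qed

lemma proj_norm: "norm (proj M x) \<le> norm x"
proof -
  have "(norm (proj M x))\<^sup>2 \<le> (norm x)\<^sup>2" using proj_pythagoras[of x] by simp
  then show ?thesis by (simp add: power2_le_iff_abs_le)
qed

lemma bounded_linear_proj: "bounded_linear (proj M)"
proof (rule bounded_linear_intro[where K=1])
  show "proj M (x + y) = proj M x + proj M y" for x y by (rule proj_add)
  show "proj M (r *\<^sub>R x) = r *\<^sub>R proj M x" for r x by (simp add: scaleR_scaleC proj_scaleC)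
  show "norm (proj M x) \<le> norm x * 1" for x using proj_norm by simp
qed

lemma proj_fix: "m \<in> M \<Longrightarrow> proj M m = m"
  by (rule proj_unique) auto

lemma proj_zero: "(\<And>m. m \<in> M \<Longrightarrow> cinner m x = 0) \<Longrightarrow> proj M x = 0"
  by (rule proj_unique) (auto intro: csubspace_0[OF M(1)])

lemma proj_self_adjoint: "cinner (proj M x) y = cinner x (proj M y)"
proof -
  have a: "cinner (proj M x) (y - proj M y) = 0" by (rule proj_orthogonal[OF proj_in])
  have b: "cinner (proj M y) (x - proj M x) = 0" by (rule proj_orthogonal[OF proj_in])
  have b': "cinner (x - proj M x) (proj M y) = 0" using b by (subst cinner_commute) simp
  have "cinner (proj M x) y = cinner (proj M x) (proj M y)" using a by (simp add: cinner_diff_right)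
  also have "\<dots> = cinner x (proj M y)" using b' by (simp add: cinner_diff_left)
  finally show ?thesis .
qed

definition projL :: "'a \<Rightarrow>\<^sub>L 'a" where "projL = Blinfun (proj M)"

lemma projL_apply [simp]: "blinfun_apply projL x = proj M x"
  unfolding projL_def by (simp add: bounded_linear_Blinfun_apply[OF bounded_linear_proj])

lemma clinear_projL: "clinear_op projL"
  by (simp add: clinear_op_def proj_scaleC)

end

section \<open>Resolvent bounds for self-adjoint operators\<close>

lemma self_adjoint_op_clinear: "self_adjoint_op H \<Longrightarrow> clinear_op H"
  by (simp add: self_adjoint_op_def)

lemma self_adjoint_opD: "self_adjoint_op H \<Longrightarrow> cinner (blinfun_apply H x) y
  = cinner x (blinfun_apply H y)"
  by (simp add: self_adjoint_op_def)

lemma self_adjoint_op_shift: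
  "self_adjoint_op H \<Longrightarrow> self_adjoint_op (H - cscaleL (complex_of_real \<mu>) id_blinfun)"
  unfolding self_adjoint_op_def
  by (auto simp: clinear_op_shift blinfun_apply_shift cinner_diff_left cinner_diff_right
      cinner_scaleC_left cinner_scaleC_right)

lemma self_adjoint_eigenvalue_real:
  assumes H: "self_adjoint_op H" and eigen: "blinfun_apply H x = \<mu> *\<^sub>C x" and x: "x \<noteq> 0"
  shows "\<mu> = complex_of_real (Re \<mu>)"
proof -
  have "cinner x (blinfun_apply H x) = cinner (blinfun_apply H x) x" using self_adjoint_opD[OF H] by simp
  then have "\<mu> * cinner x x = cnj \<mu> * cinner x x" using eigen
    by (simp add: cinner_scaleC_right cinner_scaleC_left)
  then have "\<mu> = cnj \<mu>" using x by (simp add: cinner_self_eq_0)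
  then show ?thesis by (simp add: complex_eq_iff)
qed

lemma eigenvalue_in_spectrum:
  assumes "is_eigenvalue H \<mu>"
  shows "\<mu> \<in> op_spectrum H"
proof (rule ccontr)
  assume "\<mu> \<notin> op_spectrum H"
  then have inv: "invertible_op (H - cscaleL \<mu> id_blinfun)" by (simp add: op_spectrum_def)
  obtain x where x: "x \<noteq> 0" "blinfun_apply H x = \<mu> *\<^sub>C x"
    using assms unfolding is_eigenvalue_def by blast
  then have "blinfun_apply (H - cscaleL \<mu> id_blinfun) x = 0" by (simp add: blinfun_apply_shift)
  then have "x = 0" using inverse_op_apply_left[OF inv, of x] by simp
  then show False using x(1) by simp
qed

lemma self_adjoint_resolvent_symmetric:
  assumes T: "self_adjoint_op T" and \<mu>: "complex_of_real \<mu> \<notin> op_spectrum T"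
  shows "cinner (blinfun_apply (resolvent T \<mu>) x) y = cinner x (blinfun_apply (resolvent T \<mu>) y)"
proof -
  let ?S = "T - cscaleL (complex_of_real \<mu>) id_blinfun" and ?R = "blinfun_apply (resolvent T \<mu>)"
  have S_R: "blinfun_apply ?S (?R y) = y" for y
    using shift_resolvent_apply[OF \<mu>, of y] by (simp add: blinfun_apply_shift)
  have "cinner (?R x) y = cinner (?R x) (blinfun_apply ?S (?R y))" by (simp only: S_R)
  also have "\<dots> = cinner (blinfun_apply ?S (?R x)) (?R y)"
    using self_adjoint_opD[OF self_adjoint_op_shift[OF T]] by simp
  finally show ?thesis by (simp only: S_R)
qed

lemma norm_blinfun_approx:
  assumes "0 \<le> c" "c < norm B"
  shows "\<exists>u. norm u = 1 \<and> c < norm (blinfun_apply B u)"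
proof (rule ccontr)
  assume "\<nexists>u. norm u = 1 \<and> c < norm (blinfun_apply B u)"
  then have unit: "norm (blinfun_apply B u) \<le> c" if "norm u = 1" for u
    using that by force
  have "norm (blinfun_apply B x) \<le> c * norm x" for x
  proof (cases "x = 0")
    case False
    have "norm (blinfun_apply B ((1 / norm x) *\<^sub>R x)) \<le> c" using False by (intro unit) simp
    then show ?thesis using False by (simp add: blinfun.scaleR_right divide_le_eq mult.commute)
  qed simp
  then have "norm B \<le> c" by (rule norm_blinfun_bound[OF assms(1)])
  then show False using assms(2) by simp
qed

lemma symmetric_op_square_defect:
  fixes B :: "'a::complex_inner \<Rightarrow>\<^sub>L 'a"
  assumes sym: "\<And>x y. cinner (blinfun_apply B x) y = cinner x (blinfun_apply B y)"
    and u: "norm u = 1"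
  defines "v \<equiv> blinfun_apply B u"
  shows "(norm (blinfun_apply B v - (norm B)\<^sup>2 *\<^sub>R u))\<^sup>2
      \<le> 2 * (norm B)\<^sup>2 * ((norm B)\<^sup>2 - (norm v)\<^sup>2)"
proof -
  have "norm v \<le> norm B" using norm_blinfun[of B u] u by (simp add: v_def)
  then have Bv_le: "norm (blinfun_apply B v) \<le> norm B * norm B"
    using norm_blinfun[of B v] by (meson mult_left_mono norm_ge_zero order_trans)
  have Bv: "(norm (blinfun_apply B v))\<^sup>2 \<le> (norm B)^4"
    using power_mono[OF Bv_le norm_ge_zero, of 2] by (simp add: power4_eq_xxxx power2_eq_square mult.assoc)
  have "cinner (blinfun_apply B v) u = cinner v v" unfolding v_def by (rule sym)
  then have "Re (cinner (blinfun_apply B v) u) = (norm v)\<^sup>2" by (simp add: Re_cinner_self)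
  then have "(norm (blinfun_apply B v - (norm B)\<^sup>2 *\<^sub>R u))\<^sup>2
      = (norm (blinfun_apply B v))\<^sup>2 + (norm B)^4 - 2 * (norm B)\<^sup>2 * (norm v)\<^sup>2"
    using u by (simp add: norm_diff_square_cinner cinner_scaleR_right power_mult_distrib
        flip: power_mult_distrib)
  moreover have "2 * (norm B)\<^sup>2 * ((norm B)\<^sup>2 - (norm v)\<^sup>2)
      = 2 * (norm B)^4 - 2 * (norm B)\<^sup>2 * (norm v)\<^sup>2"
    by (simp add: power4_eq_xxxx power2_eq_square algebra_simps)
  ultimately show ?thesis using Bv by linarith
qed

lemma symmetric_op_not_invertible_square_minus_norm:
  fixes B :: "'a::complex_inner \<Rightarrow>\<^sub>L 'a"
  assumes sym: "\<And>x y. cinner (blinfun_apply B x) y = cinner x (blinfun_apply B y)"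
    and B: "norm B > 0"
  shows "\<not> invertible_op ((B - cscaleL (complex_of_real (norm B)) id_blinfun)
    o\<^sub>L (B - cscaleL (complex_of_real (- norm B)) id_blinfun))"
proof (rule not_invertible_op_if_approx_kernel)
  fix e :: real assume e: "e > 0"
  define \<beta> where "\<beta> = norm B"
  define c where "c = sqrt (max 0 (\<beta>\<^sup>2 - e\<^sup>2 / (4 * \<beta>\<^sup>2)))"
  have "c < sqrt (\<beta>\<^sup>2)" unfolding c_def using B e
    by (intro real_sqrt_less_mono) (simp add: \<beta>_def)
  then have "c < \<beta>" using B by (simp add: \<beta>_def)
  then obtain u where u: "norm u = 1" "c < norm (blinfun_apply B u)"
    using norm_blinfun_approx[of c B] by (auto simp: c_def \<beta>_def)
  have "c\<^sup>2 < (norm (blinfun_apply B u))\<^sup>2"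
    using power_strict_mono[OF u(2), of 2] by (simp add: c_def)
  moreover have "\<beta>\<^sup>2 - e\<^sup>2 / (4 * \<beta>\<^sup>2) \<le> c\<^sup>2" by (simp add: c_def)
  ultimately have "2 * \<beta>\<^sup>2 * (\<beta>\<^sup>2 - (norm (blinfun_apply B u))\<^sup>2)
      < 2 * \<beta>\<^sup>2 * (e\<^sup>2 / (4 * \<beta>\<^sup>2))"
    using B by (intro mult_strict_left_mono) (auto simp: \<beta>_def)
  also have "\<dots> < e\<^sup>2" using B e by (simp add: \<beta>_def field_simps)
  finally have "(norm (blinfun_apply B (blinfun_apply B u) - \<beta>\<^sup>2 *\<^sub>R
      u))\<^sup>2 < e\<^sup>2"
    using symmetric_op_square_defect[OF sym u(1)] unfolding \<beta>_def by linarith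
  moreover have "blinfun_apply ((B - cscaleL (complex_of_real \<beta>) id_blinfun)
      o\<^sub>L (B - cscaleL (complex_of_real (- \<beta>)) id_blinfun)) u
      = blinfun_apply B (blinfun_apply B u) - \<beta>\<^sup>2 *\<^sub>R u"
    by (simp add: blinfun_apply_shift scaleC_of_real scaleC_minus_left blinfun.add_right
        blinfun.scaleR_right algebra_simps power2_eq_square)
  ultimately show "\<exists>u. norm u = 1
      \<and> norm (blinfun_apply ((B - cscaleL (complex_of_real (norm B)) id_blinfun)
      o\<^sub>L (B - cscaleL (complex_of_real (- norm B)) id_blinfun)) u) < e"
    using u(1) e by (intro exI[of _ u]) (simp add: \<beta>_def power_less_imp_less_base)
qed

lemma symmetric_op_norm_in_spectrum:
  fixes B :: "'a::complex_inner \<Rightarrow>\<^sub>L 'a"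
  assumes "\<And>x y. cinner (blinfun_apply B x) y = cinner x (blinfun_apply B y)" and "norm B > 0"
  shows "\<exists>s. \<bar>s\<bar> = norm B \<and> complex_of_real s \<in> op_spectrum B"
proof -
  have "\<not> invertible_op (B - cscaleL (complex_of_real (norm B)) id_blinfun)
      \<or> \<not> invertible_op (B - cscaleL (complex_of_real (- norm B)) id_blinfun)"
    using symmetric_op_not_invertible_square_minus_norm[OF assms] invertible_op_compose(1) by blast
  then obtain s where "s = norm B \<or> s = - norm B"
    and "\<not> invertible_op (B - cscaleL (complex_of_real s) id_blinfun)"
    by blast
  then show ?thesis unfolding op_spectrum_def by (intro exI[of _ s]) auto
qed

text \<open>Spectral mapping for the resolvent: \<open>R_\<mu> - s = -s R_\<mu> (T - (\<mu> + 1/s))\<close>.\<close>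

lemma resolvent_minus_scalar_invertible:
  assumes T: "clinear_op T" and \<mu>: "\<mu> \<notin> op_spectrum T" and s: "s \<noteq> 0"
    and \<mu>s: "\<mu> + 1 / s \<notin> op_spectrum T"
  shows "invertible_op (resolvent T \<mu> - cscaleL s id_blinfun)"
proof -
  define B where "B = resolvent T \<mu>"
  define K where "K = T - cscaleL (\<mu> + 1 / s) id_blinfun"
  have BK: "clinear_op (B o\<^sub>L K)"
    unfolding B_def K_def by (intro clinear_op_compose clinear_op_resolvent clinear_op_shift T \<mu>)
  have "blinfun_apply (B - cscaleL s id_blinfun) x
      = blinfun_apply ((B o\<^sub>L K) o\<^sub>L cscaleL (- s) id_blinfun) x" for x
  proof -
    have "blinfun_apply K x = (blinfun_apply T x - \<mu> *\<^sub>C x) - (1 / s) *\<^sub>C x"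
      by (simp add: K_def blinfun_apply_shift scaleC_add_left)
    then have "blinfun_apply B (blinfun_apply K x) = x - (1 / s) *\<^sub>C blinfun_apply B x"
      using resolvent_shift_apply[OF \<mu>] clinear_op_resolvent[OF T \<mu>]
      by (simp add: B_def blinfun.diff_right clinear_opD)
    then show ?thesis
      using clinear_opD[OF BK, of "- s" x] s
      by (simp add: blinfun_apply_shift scaleC_diff_right scaleC_scaleC scaleC_minus_left scaleC_one)
  qed
  then have "B - cscaleL s id_blinfun = (B o\<^sub>L K) o\<^sub>L cscaleL (- s) id_blinfun"
    by (rule blinfun_eqI)
  moreover have "invertible_op (cscaleL (- s) (id_blinfun :: 'a \<Rightarrow>\<^sub>L 'a))"
    using s by (intro invertible_opI(1)[of _ "cscaleL (- 1 / s) id_blinfun"])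
      (simp_all add: scaleC_scaleC scaleC_one)
  moreover have "invertible_op B" unfolding B_def resolvent_def using \<mu>
    by (intro invertible_opI(1)[of _ "T - cscaleL \<mu> id_blinfun"])
      (simp_all add: op_spectrum_def)
  moreover have "invertible_op K" using \<mu>s by (simp add: K_def op_spectrum_def)
  ultimately show ?thesis unfolding B_def[symmetric] by (simp add: invertible_op_compose(1))
qed

lemma self_adjoint_norm_resolvent_le:
  fixes T :: "'a::{complex_inner,complete_space} \<Rightarrow>\<^sub>L 'a"
  assumes T: "self_adjoint_op T" and \<mu>: "complex_of_real \<mu> \<notin> op_spectrum T"
    and d: "d > 0" and dist: "\<And>s. s \<in> op_spectrum T \<Longrightarrow> d
        \<le> cmod (s - complex_of_real \<mu>)"
  shows "norm (resolvent T \<mu>) \<le> 1 / d"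
proof (rule ccontr)
  define B where "B = resolvent T \<mu>"
  assume "\<not> norm (resolvent T \<mu>) \<le> 1 / d"
  then have less: "1 / d < norm B" by (simp add: B_def)
  then have B: "norm B > 0" using d by (meson less_trans zero_less_divide_1_iff)
  have "1 / norm B < d" using less d B by (simp add: field_simps)
  obtain s where s: "\<bar>s\<bar> = norm B" and "complex_of_real s \<in> op_spectrum B"
    using symmetric_op_norm_in_spectrum[OF _ B] self_adjoint_resolvent_symmetric[OF T \<mu>]
    unfolding B_def by blast
  moreover have "s \<noteq> 0" using s B by auto
  ultimately have "complex_of_real \<mu> + 1 / complex_of_real s \<in> op_spectrum T"
    using resolvent_minus_scalar_invertible[OF self_adjoint_op_clinear[OF T] \<mu>, of s]
    unfolding B_def op_spectrum_def by auto
  from dist[OF this] have "d \<le> 1 / norm B" using s by (simp add: norm_divide)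
  then show False using \<open>1 / norm B < d\<close> by simp
qed

lemma self_adjoint_shift_bounded_below:
  fixes T :: "'a::{complex_inner,complete_space} \<Rightarrow>\<^sub>L 'a"
  assumes T: "self_adjoint_op T" and \<mu>: "complex_of_real \<mu> \<notin> op_spectrum T"
    and d: "d > 0" and dist: "\<And>s. s \<in> op_spectrum T \<Longrightarrow> d
        \<le> cmod (s - complex_of_real \<mu>)"
  shows "d * norm y \<le> norm (blinfun_apply T y - complex_of_real \<mu> *\<^sub>C y)"
proof -
  have "norm y = norm (blinfun_apply (resolvent T \<mu>) (blinfun_apply T y - complex_of_real
      \<mu> *\<^sub>C y))"
    by (simp add: resolvent_shift_apply[OF \<mu>])
  also have "\<dots> \<le> (1 / d) * norm (blinfun_apply T y - complex_of_real \<mu> *\<^sub>C y)"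
    by (rule order_trans[OF norm_blinfun mult_right_mono[OF
        self_adjoint_norm_resolvent_le[OF T \<mu> d dist]]])
      auto
  finally show ?thesis using d by (simp add: field_simps)
qed

lemma self_adjoint_norm_shift_square:
  fixes T :: "'a::complex_inner \<Rightarrow>\<^sub>L 'a"
  assumes T: "self_adjoint_op T"
  shows "(norm (blinfun_apply T y - z *\<^sub>C y))\<^sup>2
       = (norm (blinfun_apply T y - complex_of_real (Re z) *\<^sub>C y))\<^sup>2
           + (Im z)\<^sup>2 * (norm y)\<^sup>2"
proof -
  define a where "a = Re z"
  define w where "w = blinfun_apply T y - complex_of_real a *\<^sub>C y"
  define c where "c = \<i> * complex_of_real (Im z)"
  have "z = complex_of_real a + c" by (simp add: a_def c_def complex_eq_iff)
  then have split: "blinfun_apply T y - z *\<^sub>C y = w - c *\<^sub>C y"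
    by (simp add: w_def scaleC_add_left)
  have "cinner w y = cinner y w"
    using self_adjoint_opD[OF self_adjoint_op_shift[OF T, of a], of y y]
      by (simp add: w_def blinfun_apply_shift)
  also have "\<dots> = cnj (cinner w y)" by (rule cinner_commute)
  finally have "Im (cinner w y) = 0" by (metis cnj.sel(2) neg_equal_zero)
  then have "Re (cinner w (c *\<^sub>C y)) = 0" by (simp add: cinner_scaleC_right c_def)
  moreover have "(norm (c *\<^sub>C y))\<^sup>2 = (Im z)\<^sup>2 * (norm y)\<^sup>2"
    by (simp add: norm_scaleC c_def norm_mult power_mult_distrib)
  ultimately show ?thesis by (simp add: split norm_diff_square_cinner w_def a_def)
qed

section \<open>Isolated points of the spectrum of a self-adjoint operator\<close>

lemma self_adjoint_range_dense:
  fixes S :: "'a::{complex_inner,complete_space} \<Rightarrow>\<^sub>L 'a"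
  assumes S: "self_adjoint_op S" and ker: "\<And>x. blinfun_apply S x = 0 \<Longrightarrow> x = 0"
      and \<delta>: "\<delta> > 0"
  shows "\<exists>y. norm (u - blinfun_apply S y) < \<delta>"
proof -
  define M where "M = closure (range (blinfun_apply S))"
  have M: "csubspace M" "closed M"
    unfolding M_def using csubspace_closure csubspace_range self_adjoint_op_clinear[OF S] by auto
  define w where "w = u - proj M u"
  have "cinner y (blinfun_apply S w) = 0" for y
  proof -
    have "blinfun_apply S y \<in> M" unfolding M_def by (rule subsetD[OF closure_subset]) simp
    then have "cinner (blinfun_apply S y) w = 0" unfolding w_def by (rule proj_orthogonal[OF M])
    then show ?thesis by (simp add: self_adjoint_opD[OF S])
  qed
  then have "w = 0" using cinner_eq_zero_all ker by blast
  then have "u \<in> M" using proj_in[OF M, of u] by (simp add: w_def)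
  then obtain y where "dist (blinfun_apply S y) u < \<delta>"
    unfolding M_def closure_approachable using \<delta> by blast
  then show ?thesis by (auto simp: dist_norm norm_minus_commute)
qed

lemma removable_singularity_if_pole_vanishes:
  assumes f: "f holomorphic_on ball l e - {l}"
      and lim: "((\<lambda>z. (z - l) * f z) \<longlongrightarrow> 0) (at l)"
  shows "\<exists>F. F holomorphic_on ball l e \<and> (\<forall>z\<in>ball l e - {l}. F z = f z)"
proof (cases "e > 0")
  case True
  define k where "k z = (if z = l then 0 else (z - l) * f z)" for z
  have "(\<lambda>z. (z - l) * f z) holomorphic_on ball l e - {l}" by (intro holomorphic_intros f)
  from removable_singularity[OF this _ lim] have "k holomorphic_on ball l e"
    by (simp add: k_def[abs_def])
  then obtain f' where "(k has_field_derivative f') (at l)"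
    using True unfolding holomorphic_on_open[OF open_ball] by force
  then have "((\<lambda>z. (k z - k l) / (z - l)) \<longlongrightarrow> f') (at l)"
    by (simp add: has_field_derivative_iff)
  moreover have "eventually (\<lambda>z. (k z - k l) / (z - l) = f z) (at l)"
    unfolding eventually_at by (intro exI[of _ 1]) (auto simp: k_def)
  ultimately have "(f \<longlongrightarrow> f') (at l)" by (rule Lim_transform_eventually)
  from removable_singularity[OF f _ this] show ?thesis
    by (intro exI[of _ "\<lambda>z. if z = l then f' else f z"]) auto
qed (intro exI[of _ f], simp add: ball_empty holomorphic_on_empty)

context
  fixes T :: "'a::{complex_inner,complete_space} \<Rightarrow>\<^sub>L 'a" and l r :: real
  assumes T: "self_adjoint_op T" and r: "r > 0"
    and isolated: "\<And>s. s \<in> op_spectrum T \<Longrightarrow> s = l \<or> 2 * r \<le> cmod (s - l)"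
begin

lemma near_isolated_not_in_spectrum:
  fixes z :: complex
  shows "z \<noteq> l \<Longrightarrow> cmod (z - l) < 2 * r \<Longrightarrow> z \<notin> op_spectrum T"
  using isolated by force

lemma near_isolated_real_shift_bounded_below:
  assumes a: "\<bar>a - l\<bar> \<le> r"
  shows "\<bar>a - l\<bar> * norm y \<le> norm (blinfun_apply T y - complex_of_real a *\<^sub>C y)"
proof (cases "a = l")
  case False
  have dist_a_l: "cmod (complex_of_real a - l) = \<bar>a - l\<bar>" by (simp flip: of_real_diff)
  show ?thesis
  proof (rule self_adjoint_shift_bounded_below[OF T])
    show "complex_of_real a \<notin> op_spectrum T"
      using False a r dist_a_l by (intro near_isolated_not_in_spectrum) auto
    fix s assume s: "s \<in> op_spectrum T"
    show "\<bar>a - l\<bar> \<le> cmod (s - complex_of_real a)"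
    proof (cases "s = l")
      case False
      then have "2 * r \<le> cmod (s - l)" using isolated[OF s] by auto
      also have "\<dots> \<le> cmod (s - complex_of_real a) + cmod (complex_of_real a - l)"
        using norm_triangle_ineq[of "s - complex_of_real a" "complex_of_real a - l"] by simp
      finally show ?thesis using a dist_a_l by simp
    qed (simp add: dist_a_l norm_minus_commute)
  qed (use False in simp)
qed simp

lemma near_isolated_shift_bounded_below:
  fixes z :: complex
  assumes z: "cmod (z - l) \<le> r"
  shows "cmod (z - l) * norm y \<le> norm (blinfun_apply T y - z *\<^sub>C y)"
proof -
  have Re: "\<bar>Re z - l\<bar> \<le> r" using abs_Re_le_cmod[of "z - l"] z by simp
  have "(cmod (z - l) * norm y)\<^sup>2 = (\<bar>Re z - l\<bar> * norm y)\<^sup>2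
      + (Im z)\<^sup>2 * (norm y)\<^sup>2"
    by (simp add: cmod_power2 power_mult_distrib algebra_simps)
  also have "\<dots> \<le> (norm (blinfun_apply T y - complex_of_real (Re z) *\<^sub>C y))\<^sup>2
      + (Im z)\<^sup>2 * (norm y)\<^sup>2"
    using near_isolated_real_shift_bounded_below[OF Re, of y] by (simp add: power_mono)
  also have "\<dots> = (norm (blinfun_apply T y - z *\<^sub>C y))\<^sup>2"
    by (rule self_adjoint_norm_shift_square[OF T, symmetric])
  finally show ?thesis by (rule power2_le_imp_le) simp
qed

lemma near_isolated_norm_resolvent_apply_le:
  fixes z :: complex
  assumes "z \<noteq> l" "cmod (z - l) \<le> r"
  shows "cmod (z - l) * norm (blinfun_apply (resolvent T z) x) \<le> norm x"
  using near_isolated_shift_bounded_below[OF assms(2), of "blinfun_apply (resolvent T z) x"]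
    shift_resolvent_apply[of z T x] near_isolated_not_in_spectrum[OF assms(1)] assms(2) r
  by simp

text \<open>Writing \<open>u \<approx> (T - l) y\<close> gives \<open>\<langle>u, R_z v\<rangle> \<approx> \<langle>y, v\<rangle> + (z - l) \<langle>y, R_z v\<rangle>\<close>, and
  \<open>(z - l) R_z\<close> is bounded near \<open>l\<close>.\<close>

lemma near_isolated_resolvent_coeff_bound:
  fixes z :: complex
  assumes z: "z \<noteq> l" "cmod (z - l) \<le> r"
  shows "cmod ((z - l) * cinner u (blinfun_apply (resolvent T z) v))
    \<le> norm (u - (blinfun_apply T y - complex_of_real l *\<^sub>C y)) * norm v
        + 2 * cmod (z - l) * norm y * norm v"
proof -
  define t where "t = cmod (z - l)"
  define Rv where "Rv = blinfun_apply (resolvent T z) v"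
  define Sy where "Sy = blinfun_apply T y - complex_of_real l *\<^sub>C y"
  have t_Rv: "t * norm Rv \<le> norm v"
    unfolding t_def Rv_def by (rule near_isolated_norm_resolvent_apply_le[OF z])
  have "cinner Sy Rv = cinner y (blinfun_apply T Rv - complex_of_real l *\<^sub>C Rv)"
    using self_adjoint_opD[OF self_adjoint_op_shift[OF T, of l]] by (simp add: Sy_def blinfun_apply_shift)
  also have "\<dots> = cinner y v + (z - l) * cinner y Rv"
    using shift_resolvent_apply[OF near_isolated_not_in_spectrum[OF z(1)], of v] z(2) r
    by (simp add: Rv_def cinner_add_right cinner_diff_right cinner_scaleC_right algebra_simps
        scaleC_diff_left)
  finally have Sy_Rv: "cinner Sy Rv = cinner y v + (z - l) * cinner y Rv" .
  have "(z - l) * cinner u Rv = (z - l) * (cinner (u - Sy) Rv + cinner Sy Rv)"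
    by (simp add: cinner_diff_left)
  also have "\<dots> = (z - l) * cinner (u - Sy) Rv + (z - l) * cinner y v
      + (z - l) * (z - l) * cinner y Rv"
    unfolding Sy_Rv by (simp add: algebra_simps)
  also have "cmod \<dots> \<le> t * (norm (u - Sy) * norm Rv) + t * (norm y * norm v)
      + t * t * (norm y * norm Rv)"
    unfolding t_def
    by (intro order_trans[OF norm_triangle_ineq] add_mono order_trans[OF norm_triangle_ineq])
      (auto simp: norm_mult intro!: mult_left_mono cinner_Cauchy_Schwarz)
  also have "\<dots> \<le> norm (u - Sy) * norm v + t * (norm y * norm v) + t * (norm y * norm v)"
  proof -
    have "t * (norm (u - Sy) * norm Rv) = norm (u - Sy) * (t * norm Rv)" by simp
    also have "\<dots> \<le> norm (u - Sy) * norm v" using t_Rv by (simp add: mult_left_mono)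
    finally have first: "t * (norm (u - Sy) * norm Rv) \<le> norm (u - Sy) * norm v" .
    have "t * t * (norm y * norm Rv) = (t * norm y) * (t * norm Rv)" by simp
    also have "\<dots> \<le> (t * norm y) * norm v" using t_Rv by (intro mult_left_mono) (auto simp: t_def)
    also have "\<dots> = t * (norm y * norm v)" by simp
    finally show ?thesis using first by linarith
  qed
  finally show ?thesis by (simp add: t_def Rv_def Sy_def algebra_simps)
qed

lemma near_isolated_resolvent_pole_vanishes:
  assumes dense: "\<And>\<delta>. \<delta> > 0
      \<Longrightarrow> \<exists>y. norm (u - (blinfun_apply T y - complex_of_real l
      *\<^sub>C y)) < \<delta>"
  shows "((\<lambda>z. (z - l) * cinner u (blinfun_apply (resolvent T z) v)) \<longlongrightarrow>
      0) (at (complex_of_real l))"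
proof (rule tendstoI)
  fix e :: real assume e: "e > 0"
  define K where "K = norm v + 1"
  have K: "K > 0" "norm v \<le> K" by (simp_all add: K_def add_nonneg_pos)
  obtain y where y: "norm (u - (blinfun_apply T y - complex_of_real l *\<^sub>C y)) < e / (2 * K)"
    using dense[of "e / (2 * K)"] e K by auto
  define Y where "Y = norm y + 1"
  have Y: "Y > 0" "norm y \<le> Y" by (simp_all add: Y_def add_nonneg_pos)
  define \<rho> where "\<rho> = min r (e / (4 * Y * K))"
  have "\<rho> > 0" using r e Y K by (simp add: \<rho>_def)
  moreover have "dist ((z - l) * cinner u (blinfun_apply (resolvent T z) v)) 0 < e"
    if "z \<noteq> l" "dist z l < \<rho>" for z :: complex
  proof -
    have z: "cmod (z - l) \<le> r" "cmod (z - l) < e / (4 * Y * K)"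
      using that by (auto simp: \<rho>_def dist_norm)
    have "norm (u - (blinfun_apply T y - complex_of_real l *\<^sub>C y)) * norm v \<le> e / (2 * K) * K"
      using y K e by (intro mult_mono) auto
    also have "\<dots> = e / 2" using K by simp
    finally have first: "norm (u - (blinfun_apply T y - complex_of_real l *\<^sub>C y)) *
        norm v \<le> e / 2" .
    have "2 * cmod (z - l) * norm y * norm v \<le> 2 * cmod (z - l) * Y * K"
      using Y K by (intro mult_mono mult_left_mono) auto
    also have "\<dots> = cmod (z - l) * (4 * Y * K) / 2" by simp
    also have "\<dots> < e / 2"
      using z(2) Y K by (simp add: pos_less_divide_eq mult_ac)
    finally have "cmod ((z - l) * cinner u (blinfun_apply (resolvent T z) v)) < e"
      using near_isolated_resolvent_coeff_bound[OF that(1) z(1), of u v y] first by linarith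
    then show ?thesis by simp
  qed
  ultimately show "\<forall>\<^sub>F z in at (complex_of_real l). dist ((z - l) * cinner u
      (blinfun_apply (resolvent T z) v)) 0 < e"
    unfolding eventually_at by blast
qed

lemma near_isolated_resolvent_coeff_le:
  fixes \<xi> :: complex
  assumes dense: "\<And>\<delta>. \<delta> > 0
      \<Longrightarrow> \<exists>y. norm (u - (blinfun_apply T y - complex_of_real l
      *\<^sub>C y)) < \<delta>"
    and \<xi>: "\<xi> \<noteq> l" "cmod (\<xi> - l) \<le> r"
  shows "cmod (cinner u (blinfun_apply (resolvent T \<xi>) v)) \<le> norm u * norm v / r"
proof -
  define f where "f z = cinner u (blinfun_apply (resolvent T z) v)" for z
  have "(ball (complex_of_real l) (2 * r) - {complex_of_real l}) \<inter> op_spectrum T = {}"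
    using isolated by (force simp: dist_norm norm_minus_commute)
  then have "(\<lambda>z. cinner u (blinfun_apply id_blinfun (blinfun_apply (resolvent T z) v)))
      holomorphic_on ball l (2 * r) - {complex_of_real l}"
    by (intro holomorphic_resolvent_coeff[OF self_adjoint_op_clinear[OF T] clinear_op_id]) auto
  then have "f holomorphic_on ball l (2 * r) - {complex_of_real l}"
    by (simp add: f_def[abs_def])
  then obtain F where F: "F holomorphic_on ball l (2 * r)"
      and F_f: "\<forall>z\<in>ball l (2 * r) - {complex_of_real l}. F z = f z"
    using removable_singularity_if_pole_vanishes near_isolated_resolvent_pole_vanishes[OF dense]
    unfolding f_def by blast
  have "norm (F \<xi>) \<le> norm u * norm v / r"
  proof (rule maximum_modulus_frontier[of F "cball (complex_of_real l) r"])
    show "F holomorphic_on interior (cball (complex_of_real l) r)"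
      "continuous_on (closure (cball (complex_of_real l) r)) F"
      using r by (auto intro!: holomorphic_on_subset[OF F] holomorphic_on_imp_continuous_on)
    show "\<xi> \<in> cball (complex_of_real l) r" using \<xi> by (simp add: dist_norm norm_minus_commute)
    fix z assume "z \<in> frontier (cball (complex_of_real l) r)"
    then have z: "cmod (z - l) = r" by (simp add: dist_norm norm_minus_commute)
    then have "z \<noteq> l" using r by auto
    then have "cmod (F z) \<le> norm u * norm (blinfun_apply (resolvent T z) v)"
      using F_f z r cinner_Cauchy_Schwarz by (simp add: f_def dist_norm norm_minus_commute)
    also have "\<dots> \<le> norm u * (norm v / r)"
      using near_isolated_norm_resolvent_apply_le[OF \<open>z \<noteq> l\<close>, of v] z r
      by (intro mult_left_mono) (simp_all add: field_simps)
    finally show "norm (F z) \<le> norm u * norm v / r" by simp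
  qed (simp)
  then show ?thesis using F_f \<xi> r by (simp add: f_def dist_norm norm_minus_commute)
qed

end

text \<open>For self-adjoint operators, isolated points of the spectrum are eigenvalues: at a point
  that is not, the range of \<open>T - l\<close> is dense, so the matrix coefficients of the resolvent have
  removable singularities there, and the maximum modulus principle bounds the resolvent nearby.\<close>

lemma self_adjoint_isolated_not_in_spectrum:
  fixes T :: "'a::{complex_inner,complete_space} \<Rightarrow>\<^sub>L 'a"
  assumes T: "self_adjoint_op T" and not_eigen: "\<not> is_eigenvalue T (complex_of_real l)"
    and \<epsilon>: "\<epsilon> > 0" and isolated: "\<And>s. s \<in> op_spectrum T
        \<Longrightarrow> s = l \<or> \<epsilon> \<le> cmod (s - l)"
  shows "complex_of_real l \<notin> op_spectrum T"
proof -
  define r where "r = \<epsilon> / 2"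
  have r: "r > 0" and isolated': "\<And>s. s \<in> op_spectrum T \<Longrightarrow> s
      = l \<or> 2 * r \<le> cmod (s - l)"
    using \<epsilon> isolated by (auto simp: r_def)
  define \<xi> where "\<xi> = complex_of_real (l + r / 2)"
  have \<xi>: "\<xi> \<noteq> l" "cmod (\<xi> - l) = r / 2" using r by (auto simp: \<xi>_def)
  have ker: "x = 0" if "blinfun_apply (T - cscaleL (complex_of_real l) id_blinfun) x = 0" for x
    using not_eigen that unfolding is_eigenvalue_def by (auto simp: blinfun_apply_shift)
  have dense: "\<exists>y. norm (u - (blinfun_apply T y - complex_of_real l *\<^sub>C y))
      < \<delta>" if "\<delta> > 0" for u \<delta>
    using self_adjoint_range_dense[OF self_adjoint_op_shift[OF T, of l] ker that, of u]
    by (simp add: blinfun_apply_shift)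
  have "norm (blinfun_apply (resolvent T \<xi>) v) \<le> 1 / r * norm v" for v
  proof (rule norm_le_if_cinner_le)
    fix u
    have "cmod (cinner u (blinfun_apply (resolvent T \<xi>) v)) \<le> norm u * norm v / r"
      using \<xi> r by (intro near_isolated_resolvent_coeff_le[OF T r isolated' dense]) auto
    also have "\<dots> = 1 / r * norm v * norm u" by simp
    finally show "cmod (cinner u (blinfun_apply (resolvent T \<xi>) v)) \<le> 1 / r * norm v * norm u" .
  qed (use r in simp)
  then have "norm (resolvent T \<xi>) \<le> 1 / r" using r by (intro norm_blinfun_bound) auto
  then have "cmod (complex_of_real l - \<xi>) * norm (resolvent T \<xi>) \<le> r / 2 * (1 / r)"
    using \<xi> by (intro mult_mono) (auto simp: norm_minus_commute)
  also have "\<dots> < 1" using r by simp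
  finally show ?thesis
    using resolvent_perturbation(1)[OF self_adjoint_op_clinear[OF T]]
      near_isolated_not_in_spectrum[OF T r isolated' \<xi>(1)] \<xi> r by simp
qed

section \<open>Moving finitely many eigenvalues of a self-adjoint operator\<close>

definition eigenspace :: "('a::complex_normed_vector \<Rightarrow>\<^sub>L 'a) \<Rightarrow> complex \<Rightarrow> 'a set"
  where
  "eigenspace H \<mu> = {x. blinfun_apply H x = \<mu> *\<^sub>C x}"

lemma eigenspace_kernel: "eigenspace H \<mu> = {x. blinfun_apply (H - cscaleL \<mu> id_blinfun) x = 0}"
  by (auto simp: eigenspace_def blinfun_apply_shift)

lemma eigenspace_csubspace: "clinear_op H \<Longrightarrow> csubspace (eigenspace H \<mu>)"
  unfolding eigenspace_kernel by (intro csubspace_kernel clinear_op_shift)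

lemma closed_eigenspace: "closed (eigenspace H \<mu>)"
  unfolding eigenspace_kernel by (rule closed_kernel)

locale finite_eigenvalues =
  fixes H :: "'a::{complex_inner,complete_space} \<Rightarrow>\<^sub>L 'a"
      and lam :: "nat \<Rightarrow> complex" and m :: nat
  assumes self_adjoint: "self_adjoint_op H"
    and eigenvalue: "\<forall>j\<in>{1..m}. is_eigenvalue H (lam j)"
    and distinct: "inj_on lam {1..m}"
begin

definition eproj :: "nat \<Rightarrow> 'a \<Rightarrow>\<^sub>L 'a" where
  "eproj j = projL (eigenspace H (lam j))"

definition eproj_sum :: "'a \<Rightarrow>\<^sub>L 'a" where
  "eproj_sum = (\<Sum>j\<in>{1..m}. eproj j)"

definition eproj_compl :: "'a \<Rightarrow>\<^sub>L 'a" where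
  "eproj_compl = id_blinfun - eproj_sum"

definition moved :: "real \<Rightarrow> 'a \<Rightarrow>\<^sub>L 'a" where
  "moved c = (H o\<^sub>L eproj_compl) + cscaleL (complex_of_real c) eproj_sum"

lemma H_clinear: "clinear_op H" using self_adjoint by (rule self_adjoint_op_clinear)

lemma eigenvalue_real: "j \<in> {1..m} \<Longrightarrow> lam j = complex_of_real (Re (lam j))"
proof -
  assume j: "j \<in> {1..m}"
  then obtain x where "x \<noteq> 0" "blinfun_apply H x = lam j *\<^sub>C x" using eigenvalue
    unfolding is_eigenvalue_def by blast
  then show ?thesis using self_adjoint_eigenvalue_real[OF self_adjoint] by blast
qed

lemma cnj_eigenvalue: "j \<in> {1..m} \<Longrightarrow> cnj (lam j) = lam j"
  by (subst (1 2) eigenvalue_real) auto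

lemma eigenspace_subspace: "csubspace (eigenspace H (lam j))" "closed (eigenspace H (lam j))"
  by (rule eigenspace_csubspace[OF H_clinear]) (rule closed_eigenspace)

lemma eigenspace_orthogonal:
  assumes j: "j \<in> {1..m}" and k: "k \<in> {1..m}" and jk: "j \<noteq> k"
    and e: "e \<in> eigenspace H (lam j)" and f: "f \<in> eigenspace H (lam k)"
  shows "cinner e f = 0"
proof -
  have "cinner (blinfun_apply H e) f = cinner e (blinfun_apply H f)"
    by (rule self_adjoint_opD[OF self_adjoint])
  then have "cnj (lam j) * cinner e f = lam k * cinner e f"
    using e f by (simp add: eigenspace_def cinner_scaleC_left cinner_scaleC_right)
  then have "(lam j - lam k) * cinner e f = 0" using cnj_eigenvalue[OF j] by (simp add: algebra_simps)
  moreover have "lam j \<noteq> lam k" using distinct j k jk by (auto dest: inj_onD)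
  ultimately show ?thesis by simp
qed

lemma eproj_apply: "blinfun_apply (eproj j) x = proj (eigenspace H (lam j)) x"
  unfolding eproj_def by (rule projL_apply[OF eigenspace_subspace])

lemma eproj_in_eigenspace: "blinfun_apply (eproj j) x \<in> eigenspace H (lam j)"
  unfolding eproj_apply by (rule proj_in[OF eigenspace_subspace])

lemma H_eproj: "blinfun_apply H (blinfun_apply (eproj j) x) = lam j *\<^sub>C blinfun_apply (eproj j) x"
  using eproj_in_eigenspace[of j x] by (simp add: eigenspace_def)

lemma eproj_fix: "x \<in> eigenspace H (lam j) \<Longrightarrow> blinfun_apply (eproj j) x = x"
  unfolding eproj_apply by (rule proj_fix[OF eigenspace_subspace])

lemma eproj_eproj_neq: "j \<in> {1..m} \<Longrightarrow> k \<in> {1..m}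
  \<Longrightarrow> j \<noteq> k \<Longrightarrow> blinfun_apply (eproj j) (blinfun_apply (eproj k) x) = 0"
  unfolding eproj_apply[of j]
    by (rule proj_zero[OF eigenspace_subspace]) (rule eigenspace_orthogonal, auto intro:
      eproj_in_eigenspace)

lemma eproj_idem: "blinfun_apply (eproj j) (blinfun_apply (eproj j) x) = blinfun_apply (eproj j) x"
  by (rule eproj_fix[OF eproj_in_eigenspace])

lemma eproj_self_adjoint: "cinner (blinfun_apply (eproj j) x) y = cinner x (blinfun_apply (eproj j) y)"
  unfolding eproj_apply by (rule proj_self_adjoint[OF eigenspace_subspace])

lemma clinear_op_eproj: "clinear_op (eproj j)"
  unfolding eproj_def by (rule clinear_projL[OF eigenspace_subspace])

lemma eproj_H: "j \<in> {1..m} \<Longrightarrow> blinfun_apply (eproj j) (blinfun_apply H x)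
  = lam j *\<^sub>C blinfun_apply (eproj j) x"
  unfolding eproj_apply[of j]
proof (rule proj_unique[OF eigenspace_subspace])
  assume j: "j \<in> {1..m}"
  show "lam j *\<^sub>C proj (eigenspace H (lam j)) x \<in> eigenspace H (lam j)"
    by (rule csubspace_scaleC[OF eigenspace_subspace(1)]) (rule proj_in[OF eigenspace_subspace])
  fix e assume e: "e \<in> eigenspace H (lam j)"
  have "cinner e (blinfun_apply H x) = cinner (blinfun_apply H e) x"
    by (rule self_adjoint_opD[OF self_adjoint, symmetric])
  also have "\<dots> = lam j * cinner e x" using e cnj_eigenvalue[OF j]
    by (simp add: eigenspace_def cinner_scaleC_left)
  finally have a: "cinner e (blinfun_apply H x) = lam j * cinner e x" .
  have b: "cinner e (x - proj (eigenspace H (lam j)) x) = 0"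
    by (rule proj_orthogonal[OF eigenspace_subspace e])
  show "cinner e (blinfun_apply H x - lam j *\<^sub>C proj (eigenspace H (lam j)) x) = 0"
    using a b by (simp add: cinner_diff_right cinner_scaleC_right algebra_simps)
qed

lemma eproj_sum_apply: "blinfun_apply eproj_sum x = (\<Sum>j\<in>{1..m}. blinfun_apply (eproj j) x)"
  unfolding eproj_sum_def by (rule blinfun.sum_left)

lemma eproj_compl_apply: "blinfun_apply eproj_compl x = x - blinfun_apply eproj_sum x"
  unfolding eproj_compl_def by (simp add: blinfun.diff_left)

lemma eproj_eproj_sum: "k \<in> {1..m}
  \<Longrightarrow> blinfun_apply (eproj k) (blinfun_apply eproj_sum x) = blinfun_apply (eproj k) x"
proof -
  assume k: "k \<in> {1..m}"
  have "blinfun_apply (eproj k) (blinfun_apply eproj_sum x)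
      = (\<Sum>j\<in>{1..m}. blinfun_apply (eproj k) (blinfun_apply (eproj j) x))"
    by (simp add: eproj_sum_apply blinfun.sum_right)
  also have "\<dots> = (\<Sum>j\<in>{1..m}. if j = k then blinfun_apply (eproj k) x else 0)"
  proof (rule sum.cong[OF refl])
    fix j assume j: "j \<in> {1..m}"
    show "blinfun_apply (eproj k) (blinfun_apply (eproj j) x) = (if j
        = k then blinfun_apply (eproj k) x else 0)"
    proof (cases "j = k")
      case True then show ?thesis by (simp add: eproj_idem)
    next
      case False then have "k \<noteq> j" by simp
      then show ?thesis using eproj_eproj_neq[OF k j] False by simp
    qed
  qed
  also have "\<dots> = blinfun_apply (eproj k) x" using k by simp
  finally show ?thesis .
qed

lemma eproj_eproj_compl: "k \<in> {1..m}
  \<Longrightarrow> blinfun_apply (eproj k) (blinfun_apply eproj_compl x) = 0"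
  by (simp add: eproj_compl_apply blinfun.diff_right eproj_eproj_sum)

lemma eproj_sum_idem: "blinfun_apply eproj_sum (blinfun_apply eproj_sum x) = blinfun_apply eproj_sum x"
proof -
  have "blinfun_apply eproj_sum (blinfun_apply eproj_sum x)
      = (\<Sum>j\<in>{1..m}. blinfun_apply (eproj j) (blinfun_apply eproj_sum x))"
    by (rule eproj_sum_apply)
  also have "\<dots> = (\<Sum>j\<in>{1..m}. blinfun_apply (eproj j) x)"
    by (rule sum.cong[OF refl]) (rule eproj_eproj_sum)
  also have "\<dots> = blinfun_apply eproj_sum x" by (rule eproj_sum_apply[symmetric])
  finally show ?thesis .
qed

lemma eproj_sum_eproj_compl: "blinfun_apply eproj_sum (blinfun_apply eproj_compl x) = 0"
proof -
  have "blinfun_apply eproj_sum (blinfun_apply eproj_compl x)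
      = (\<Sum>j\<in>{1..m}. blinfun_apply (eproj j) (blinfun_apply eproj_compl x))"
    by (rule eproj_sum_apply)
  also have "\<dots> = (\<Sum>j\<in>{1..m}. 0)" by (rule sum.cong[OF refl]) (rule eproj_eproj_compl)
  finally show ?thesis by simp
qed

lemma eproj_compl_idem: "blinfun_apply eproj_compl (blinfun_apply eproj_compl x)
  = blinfun_apply eproj_compl x"
  by (subst (1) eproj_compl_apply) (simp add: eproj_sum_eproj_compl)

lemma eproj_compl_eproj_sum: "blinfun_apply eproj_compl (blinfun_apply eproj_sum x) = 0"
  by (simp add: eproj_compl_apply eproj_sum_idem)

lemma clinear_op_eproj_sum: "clinear_op eproj_sum" unfolding eproj_sum_def
  by (rule clinear_op_sum) (rule clinear_op_eproj)
lemma clinear_op_eproj_compl: "clinear_op eproj_compl" unfolding eproj_compl_def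
  by (rule clinear_op_diff[OF clinear_op_id clinear_op_eproj_sum])

lemma H_eproj_sum_commute: "blinfun_apply H (blinfun_apply eproj_sum x)
  = blinfun_apply eproj_sum (blinfun_apply H x)"
proof -
  have "blinfun_apply H (blinfun_apply eproj_sum x)
      = (\<Sum>j\<in>{1..m}. lam j *\<^sub>C blinfun_apply (eproj j) x)"
    by (simp add: eproj_sum_apply blinfun.sum_right H_eproj)
  also have "\<dots> = blinfun_apply eproj_sum (blinfun_apply H x)"
    by (simp add: eproj_sum_apply eproj_H)
  finally show ?thesis .
qed

lemma H_eproj_compl_commute: "blinfun_apply H (blinfun_apply eproj_compl x)
  = blinfun_apply eproj_compl (blinfun_apply H x)"
  by (simp add: eproj_compl_apply blinfun.diff_right H_eproj_sum_commute)

lemma eproj_sum_self_adjoint: "cinner (blinfun_apply eproj_sum x) y = cinner x (blinfun_apply eproj_sum y)"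
  by (simp add: eproj_sum_apply cinner_sum_left cinner_sum_right eproj_self_adjoint)

lemma eproj_compl_self_adjoint: "cinner (blinfun_apply eproj_compl x) y
  = cinner x (blinfun_apply eproj_compl y)"
  by (simp add: eproj_compl_apply cinner_diff_left cinner_diff_right eproj_sum_self_adjoint)

lemma eproj_sum_compl_orthogonal: "cinner (blinfun_apply eproj_sum x) (blinfun_apply eproj_compl y) = 0"
  by (simp add: eproj_sum_self_adjoint eproj_sum_eproj_compl)

lemma norm_eproj_split: "(norm x)\<^sup>2 = (norm (blinfun_apply eproj_sum x))\<^sup>2
  + (norm (blinfun_apply eproj_compl x))\<^sup>2"
proof -
  have "x = blinfun_apply eproj_sum x + blinfun_apply eproj_compl x" by (simp add: eproj_compl_apply)
  then have "(norm x)\<^sup>2 = (norm (blinfun_apply eproj_sum x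
      + blinfun_apply eproj_compl x))\<^sup>2" by simp
  also have "\<dots> = (norm (blinfun_apply eproj_sum x))\<^sup>2
      + (norm (blinfun_apply eproj_compl x))\<^sup>2"
    by (rule pythagoras_cinner[OF eproj_sum_compl_orthogonal])
  finally show ?thesis .
qed

lemma norm_eproj_sum_square: "(norm (blinfun_apply eproj_sum x))\<^sup>2
  = (\<Sum>j\<in>{1..m}. (norm (blinfun_apply (eproj j) x))\<^sup>2)"
  unfolding eproj_sum_apply
  by (rule pythagoras_sum_cinner) (auto intro: eigenspace_orthogonal eproj_in_eigenspace)

lemma moved_apply: "blinfun_apply (moved c) x = blinfun_apply H (blinfun_apply eproj_compl x)
  + complex_of_real c *\<^sub>C blinfun_apply eproj_sum x"
  unfolding moved_def by (simp add: blinfun.add_left)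

lemma clinear_op_moved: "clinear_op (moved c)"
  unfolding moved_def
    by (intro clinear_op_add clinear_op_compose clinear_op_cscaleL H_clinear clinear_op_eproj_compl
      clinear_op_eproj_sum)

lemma self_adjoint_moved: "self_adjoint_op (moved c)"
  unfolding self_adjoint_op_def
proof (intro conjI allI clinear_op_moved)
  fix x y
  have "cinner (blinfun_apply H (blinfun_apply eproj_compl x)) y
      = cinner x (blinfun_apply H (blinfun_apply eproj_compl y))"
    by (simp add: self_adjoint_opD[OF self_adjoint] eproj_compl_self_adjoint H_eproj_compl_commute)
  moreover have "cinner (complex_of_real c *\<^sub>C blinfun_apply eproj_sum x) y
      = cinner x (complex_of_real c *\<^sub>C blinfun_apply eproj_sum y)"
    by (simp add: cinner_scaleC_left cinner_scaleC_right eproj_sum_self_adjoint)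
  ultimately show "cinner (blinfun_apply (moved c) x) y = cinner x (blinfun_apply (moved c) y)"
    by (simp add: moved_apply cinner_add_left cinner_add_right)
qed

lemma moved_eproj_compl: "blinfun_apply (moved c) (blinfun_apply eproj_compl x)
  = blinfun_apply H (blinfun_apply eproj_compl x)"
  by (simp add: moved_apply eproj_compl_idem eproj_sum_eproj_compl)

lemma eproj_compl_moved: "blinfun_apply eproj_compl (blinfun_apply (moved c) x)
  = blinfun_apply H (blinfun_apply eproj_compl x)"
  by (simp add: moved_apply blinfun.add_right clinear_opD[OF clinear_op_eproj_compl]
      eproj_compl_eproj_sum H_eproj_compl_commute[symmetric] eproj_compl_idem)

lemma moved_eproj_compl_commute: "blinfun_apply (moved c) (blinfun_apply eproj_compl x)
  = blinfun_apply eproj_compl (blinfun_apply (moved c) x)"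
  by (simp only: moved_eproj_compl eproj_compl_moved)

lemma moved_eproj_sum: "blinfun_apply (moved c) (blinfun_apply eproj_sum x)
  = complex_of_real c *\<^sub>C blinfun_apply eproj_sum x"
  by (simp add: moved_apply eproj_compl_eproj_sum eproj_sum_idem)

lemma eproj_moved: "k \<in> {1..m}
  \<Longrightarrow> blinfun_apply (eproj k) (blinfun_apply (moved c) x)
  = complex_of_real c *\<^sub>C blinfun_apply (eproj k) x"
  by (simp add: moved_apply blinfun.add_right clinear_opD[OF clinear_op_eproj] eproj_H
      eproj_eproj_compl eproj_eproj_sum)

lemma not_eigenvalue_moved:
  assumes c: "complex_of_real c \<notin> lam ` {1..m}" and j: "j \<in> {1..m}"
  shows "\<not> is_eigenvalue (moved c) (lam j)"
  unfolding is_eigenvalue_def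
proof (intro notI, elim exE conjE)
  fix x assume "x \<noteq> 0" and x: "blinfun_apply (moved c) x = lam j *\<^sub>C x"
  have pk: "blinfun_apply (eproj k) x = 0" if k: "k \<in> {1..m}" for k
  proof -
    have "complex_of_real c *\<^sub>C blinfun_apply (eproj k) x = lam j *\<^sub>C blinfun_apply (eproj k) x"
      using eproj_moved[OF k, of c x] x by (simp add: clinear_opD[OF clinear_op_eproj])
    then have "(complex_of_real c - lam j) *\<^sub>C blinfun_apply (eproj k) x = 0"
      by (simp add: scaleC_diff_left)
    moreover have "complex_of_real c - lam j \<noteq> 0" using c j by auto
    ultimately show ?thesis by (simp add: scaleC_eq_0_iff)
  qed
  have ps: "blinfun_apply eproj_sum x = 0" by (simp add: eproj_sum_apply pk)
  then have qs: "blinfun_apply eproj_compl x = x" by (simp add: eproj_compl_apply)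
  have "blinfun_apply H x = lam j *\<^sub>C x" using x by (simp add: moved_apply ps qs)
  then have "x = blinfun_apply (eproj j) x" by (simp add: eproj_fix eigenspace_def)
  then show False using pk[OF j] \<open>x \<noteq> 0\<close> by simp
qed

lemma resolvent_eproj_compl_commute:
  assumes z: "z \<notin> op_spectrum H"
  shows "blinfun_apply (resolvent H z) (blinfun_apply eproj_compl y)
      = blinfun_apply eproj_compl (blinfun_apply (resolvent H z) y)"
  unfolding resolvent_def
proof (rule inverse_op_commute)
  show "invertible_op (H - cscaleL z id_blinfun)" using z by (simp add: op_spectrum_def)
  fix y
  show "blinfun_apply (H - cscaleL z id_blinfun) (blinfun_apply eproj_compl y)
      = blinfun_apply eproj_compl (blinfun_apply (H - cscaleL z id_blinfun) y)"
    by (simp add: blinfun_apply_shift H_eproj_compl_commute blinfun.diff_right clinear_opD[OF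
        clinear_op_eproj_compl])
qed

lemma resolvent_moved_eproj_compl_commute:
  assumes z: "z \<notin> op_spectrum (moved c)"
  shows "blinfun_apply (resolvent (moved c) z) (blinfun_apply eproj_compl y)
      = blinfun_apply eproj_compl (blinfun_apply (resolvent (moved c) z) y)"
  unfolding resolvent_def
proof (rule inverse_op_commute)
  show "invertible_op (moved c - cscaleL z id_blinfun)" using z by (simp add: op_spectrum_def)
  fix y
  show "blinfun_apply (moved c - cscaleL z id_blinfun) (blinfun_apply eproj_compl y)
      = blinfun_apply eproj_compl (blinfun_apply (moved c - cscaleL z id_blinfun) y)"
    by (simp only: blinfun_apply_shift moved_eproj_compl_commute blinfun.diff_right clinear_opD[OF
        clinear_op_eproj_compl])
qed

definition moved_resolvent :: "real \<Rightarrow> complex \<Rightarrow> 'a \<Rightarrow>\<^sub>L 'a" where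
  "moved_resolvent c z = (eproj_compl o\<^sub>L resolvent H z)
      + cscaleL (1 / (complex_of_real c - z)) eproj_sum"

lemma moved_resolvent_apply:
  "blinfun_apply (moved_resolvent c z) x
    = blinfun_apply eproj_compl (blinfun_apply (resolvent H z) x)
        + (1 / (complex_of_real c - z)) *\<^sub>C blinfun_apply eproj_sum x"
  by (simp add: moved_resolvent_def blinfun.add_left)

lemma moved_shift_moved_resolvent:
  assumes z: "z \<notin> op_spectrum H" and zc: "z \<noteq> complex_of_real c"
  shows "blinfun_apply (moved c - cscaleL z id_blinfun) (blinfun_apply (moved_resolvent c z) x) = x"
proof -
  define Rx where "Rx = blinfun_apply (resolvent H z) x"
  have "blinfun_apply (moved c - cscaleL z id_blinfun) (blinfun_apply (moved_resolvent c z) x)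
      = (blinfun_apply H (blinfun_apply eproj_compl Rx) - z *\<^sub>C blinfun_apply eproj_compl Rx)
        + (1 / (complex_of_real c - z)) *\<^sub>C (complex_of_real c *\<^sub>C blinfun_apply
            eproj_sum x - z *\<^sub>C blinfun_apply eproj_sum x)"
    by (simp add: blinfun_apply_shift moved_resolvent_apply Rx_def blinfun.add_right
        clinear_opD[OF clinear_op_moved] moved_eproj_compl moved_eproj_sum
        scaleC_add_right scaleC_diff_right scaleC_scaleC mult.commute algebra_simps)
  also have "blinfun_apply H (blinfun_apply eproj_compl Rx) - z *\<^sub>C blinfun_apply eproj_compl Rx
      = blinfun_apply eproj_compl x"
    using arg_cong[OF shift_resolvent_apply[OF z, of x], of "blinfun_apply eproj_compl"]
    by (simp add: Rx_def H_eproj_compl_commute blinfun.diff_right clinear_opD[OF clinear_op_eproj_compl])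
  also have "(1 / (complex_of_real c - z)) *\<^sub>C (complex_of_real c *\<^sub>C blinfun_apply
      eproj_sum x - z *\<^sub>C blinfun_apply eproj_sum x)
      = blinfun_apply eproj_sum x"
    using zc by (simp add: scaleC_diff_left[symmetric] scaleC_scaleC scaleC_one)
  finally show ?thesis by (simp add: eproj_compl_apply)
qed

lemma moved_resolvent_moved_shift:
  assumes z: "z \<notin> op_spectrum H" and zc: "z \<noteq> complex_of_real c"
  shows "blinfun_apply (moved_resolvent c z) (blinfun_apply (moved c - cscaleL z id_blinfun) x) = x"
proof -
  define q where "q = blinfun_apply eproj_compl x"
  define p where "p = blinfun_apply eproj_sum x"
  have x: "x = q + p" by (simp add: q_def p_def eproj_compl_apply)
  have shift: "blinfun_apply (moved c - cscaleL z id_blinfun) x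
      = (blinfun_apply H q - z *\<^sub>C q) + (complex_of_real c - z) *\<^sub>C p"
    by (simp add: blinfun_apply_shift moved_apply q_def[symmetric] p_def[symmetric] x[symmetric]
        scaleC_diff_left scaleC_add_right) (simp add: x scaleC_add_right algebra_simps)
  have "blinfun_apply eproj_compl (blinfun_apply (resolvent H z) p) = 0"
    by (simp add: p_def resolvent_eproj_compl_commute[OF z, symmetric] eproj_compl_eproj_sum)
  moreover have "blinfun_apply eproj_sum (blinfun_apply H q - z *\<^sub>C q) = 0"
    by (simp add: q_def H_eproj_sum_commute[symmetric] eproj_sum_eproj_compl blinfun.diff_right
        clinear_opD[OF clinear_op_eproj_sum])
  ultimately have "blinfun_apply (moved_resolvent c z) (blinfun_apply (moved c - cscaleL z id_blinfun) x)
      = q + (1 / (complex_of_real c - z)) *\<^sub>C ((complex_of_real c - z) *\<^sub>C p)"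
    by (simp add: moved_resolvent_apply shift blinfun.add_right resolvent_shift_apply[OF z]
        clinear_opD[OF clinear_op_resolvent[OF H_clinear z]] clinear_opD[OF clinear_op_eproj_compl]
        clinear_opD[OF clinear_op_eproj_sum] q_def p_def eproj_compl_idem eproj_sum_idem)
  also have "\<dots> = x" using zc x by (simp add: scaleC_scaleC scaleC_one)
  finally show ?thesis .
qed

lemma not_in_spectrum_moved:
  assumes "z \<notin> op_spectrum H" "z \<noteq> complex_of_real c"
  shows "z \<notin> op_spectrum (moved c)"
  using invertible_opI(1)[OF moved_shift_moved_resolvent[OF assms] moved_resolvent_moved_shift[OF assms]]
  by (simp add: op_spectrum_def)

lemma resolvent_decomposition:
  assumes z: "z \<notin> op_spectrum H" and zc: "z \<notin> op_spectrum (moved c)"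
    and zl: "z \<notin> lam ` {1..m}"
  shows "blinfun_apply (resolvent H z) x
       = blinfun_apply (resolvent (moved c) z) (blinfun_apply eproj_compl x)
         + (\<Sum>k\<in>{1..m}. (1 / (lam k - z)) *\<^sub>C blinfun_apply (eproj k) x)"
proof -
  define y where "y = blinfun_apply (resolvent (moved c) z) (blinfun_apply eproj_compl x)"
  define w where "w = (\<Sum>k\<in>{1..m}. (1 / (lam k - z)) *\<^sub>C blinfun_apply (eproj k) x)"
  have yq: "y = blinfun_apply eproj_compl (blinfun_apply (resolvent (moved c) z) x)"
    unfolding y_def by (rule resolvent_moved_eproj_compl_commute[OF zc])
  have Hy: "blinfun_apply H y - z *\<^sub>C y = blinfun_apply eproj_compl x"
  proof -
    have "blinfun_apply H y = blinfun_apply (moved c) y" unfolding yq by (simp only: moved_eproj_compl)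
    then show ?thesis using shift_resolvent_apply[OF zc, of "blinfun_apply eproj_compl x"]
      by (simp add: y_def)
  qed
  have Hw: "blinfun_apply H w - z *\<^sub>C w = blinfun_apply eproj_sum x"
  proof -
    have "blinfun_apply H w - z *\<^sub>C w
        = (\<Sum>k\<in>{1..m}. (1 / (lam k - z)) *\<^sub>C ((lam k - z) *\<^sub>C
        blinfun_apply (eproj k) x))"
      by (simp add: w_def blinfun.sum_right clinear_opD[OF H_clinear] H_eproj scaleC_sum_right
          sum_subtractf[symmetric]
          scaleC_diff_left scaleC_diff_right scaleC_scaleC algebra_simps)
    also have "\<dots> = (\<Sum>k\<in>{1..m}. blinfun_apply (eproj k) x)"
    proof (rule sum.cong[OF refl])
      fix k assume k: "k \<in> {1..m}"
      have "lam k - z \<noteq> 0" using zl k by auto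
      then show "(1 / (lam k - z)) *\<^sub>C ((lam k - z) *\<^sub>C blinfun_apply (eproj k) x)
          = blinfun_apply (eproj k) x"
        by (simp add: scaleC_scaleC scaleC_one)
    qed
    finally show ?thesis by (simp add: eproj_sum_apply)
  qed
  have "blinfun_apply H (y + w) - z *\<^sub>C (y + w) = x"
    using Hy Hw by (simp add: blinfun.add_right scaleC_add_right eproj_compl_apply algebra_simps)
  then have "blinfun_apply (resolvent H z) x = y + w" using resolvent_shift_apply[OF z, of "y + w"] by simp
  then show ?thesis by (simp add: y_def w_def)
qed

lemma resolvent_sandwich_coeff_expansion:
  assumes Xc: "clinear_op X"
    and z: "z \<notin> op_spectrum H" and zc: "z \<notin> op_spectrum (moved c)"
        and zl: "z \<notin> lam ` {1..m}"
  shows "cinner u (blinfun_apply (resolvent H z) (blinfun_apply X (blinfun_apply (resolvent H z) v)))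
    = cinner u (blinfun_apply (resolvent (moved c) z) (blinfun_apply eproj_compl (blinfun_apply X
          (blinfun_apply (resolvent (moved c) z) (blinfun_apply eproj_compl v)))))
    + (\<Sum>k\<in>{1..m}. (1 / (lam k - z)) * cinner u (blinfun_apply (resolvent (moved c) z)
          (blinfun_apply eproj_compl (blinfun_apply X (blinfun_apply (eproj k) v)))))
    + ((\<Sum>j\<in>{1..m}. (1 / (lam j - z)) * cinner (blinfun_apply (eproj j) u)
          (blinfun_apply X (blinfun_apply (resolvent (moved c) z) (blinfun_apply eproj_compl v))))
     + (\<Sum>j\<in>{1..m}. (1 / (lam j - z)) * (\<Sum>k\<in>{1..m}. (1 / (lam k - z)) *
          cinner (blinfun_apply (eproj j) u) (blinfun_apply X (blinfun_apply (eproj k) v)))))"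
proof -
  define R' where "R' = resolvent (moved c) z"
  define Q where "Q = eproj_compl"
  have R'c: "clinear_op R'" unfolding R'_def by (rule clinear_op_resolvent[OF clinear_op_moved zc])
  have Qc: "clinear_op Q" unfolding Q_def by (rule clinear_op_eproj_compl)
  define w0 where "w0 = blinfun_apply R' (blinfun_apply Q v)"
  have w: "blinfun_apply (resolvent H z) v = w0
      + (\<Sum>k\<in>{1..m}. (1 / (lam k - z)) *\<^sub>C blinfun_apply (eproj k) v)"
    unfolding w0_def R'_def Q_def by (rule resolvent_decomposition[OF z zc zl])
  have Xw: "blinfun_apply X (blinfun_apply (resolvent H z) v)
      = blinfun_apply X w0
          + (\<Sum>k\<in>{1..m}. (1 / (lam k - z)) *\<^sub>C blinfun_apply X (blinfun_apply (eproj k) v))"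
    by (simp add: w blinfun.add_right blinfun.sum_right clinear_opD[OF Xc])
  define y where "y = blinfun_apply X (blinfun_apply (resolvent H z) v)"
  have Ry: "blinfun_apply (resolvent H z) y = blinfun_apply R' (blinfun_apply Q y)
      + (\<Sum>j\<in>{1..m}. (1 / (lam j - z)) *\<^sub>C blinfun_apply (eproj j) y)"
    unfolding R'_def Q_def by (rule resolvent_decomposition[OF z zc zl])
  have compl_part: "cinner u (blinfun_apply R' (blinfun_apply Q y))
      = cinner u (blinfun_apply R' (blinfun_apply Q (blinfun_apply X w0)))
        + (\<Sum>k\<in>{1..m}. (1 / (lam k - z)) * cinner u (blinfun_apply R' (blinfun_apply Q
            (blinfun_apply X (blinfun_apply (eproj k) v)))))"
    by (simp add: y_def Xw blinfun.add_right blinfun.sum_right clinear_opD[OF Qc] clinear_opD[OF R'c]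
        cinner_add_right cinner_sum_right cinner_scaleC_right)
  have eproj_part: "cinner u (\<Sum>j\<in>{1..m}. (1 / (lam j - z)) *\<^sub>C blinfun_apply (eproj j) y)
      = (\<Sum>j\<in>{1..m}. (1 / (lam j - z)) * cinner (blinfun_apply (eproj j) u) (blinfun_apply X w0))
       + (\<Sum>j\<in>{1..m}. (1 / (lam j - z)) * (\<Sum>k\<in>{1..m}. (1 / (lam k - z)) *
          cinner (blinfun_apply (eproj j) u) (blinfun_apply X (blinfun_apply (eproj k) v))))"
  proof -
    have "cinner u (\<Sum>j\<in>{1..m}. (1 / (lam j - z)) *\<^sub>C blinfun_apply (eproj j) y)
        = (\<Sum>j\<in>{1..m}. (1 / (lam j - z)) * cinner (blinfun_apply (eproj j) u) y)"
      by (simp add: cinner_sum_right cinner_scaleC_right eproj_self_adjoint)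
    also have "\<dots>
        = (\<Sum>j\<in>{1..m}. (1 / (lam j - z)) * cinner (blinfun_apply (eproj j) u) (blinfun_apply X w0)
        + (1 / (lam j - z)) * (\<Sum>k\<in>{1..m}. (1 / (lam k - z)) *
          cinner (blinfun_apply (eproj j) u) (blinfun_apply X (blinfun_apply (eproj k) v))))"
      by (simp add: y_def Xw cinner_add_right cinner_sum_right cinner_scaleC_right distrib_left)
    also have "\<dots>
        = (\<Sum>j\<in>{1..m}. (1 / (lam j - z)) * cinner (blinfun_apply (eproj j) u) (blinfun_apply X w0))
       + (\<Sum>j\<in>{1..m}. (1 / (lam j - z)) * (\<Sum>k\<in>{1..m}. (1 / (lam k - z)) *
          cinner (blinfun_apply (eproj j) u) (blinfun_apply X (blinfun_apply (eproj k) v))))"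
      by (rule sum.distrib)
    finally show ?thesis .
  qed
  have e: "cinner u (blinfun_apply (resolvent H z) y)
      = cinner u (blinfun_apply R' (blinfun_apply Q y))
          + cinner u (\<Sum>j\<in>{1..m}. (1 / (lam j - z)) *\<^sub>C blinfun_apply (eproj j) y)"
    by (simp only: Ry cinner_add_right)
  note e' = e[unfolded compl_part eproj_part]
  show ?thesis using e' unfolding y_def w0_def R'_def Q_def .
qed


end

section \<open>Contour integrals\<close>

lemma has_contour_integral_simple_pole:
  assumes S: "open S" and g: "g holomorphic_on S" and l: "l \<in> S" and \<gamma>: "valid_path \<gamma>"
    and \<gamma>_S: "path_image \<gamma> \<subseteq> S - {l}" and loop: "pathfinish \<gamma>
        = pathstart \<gamma>"
    and zero: "\<And>w. w \<notin> S \<Longrightarrow> winding_number \<gamma> w = 0"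
  shows "((\<lambda>z. 1 / (l - z) * g z) has_contour_integral - (2 * pi * \<i> * winding_number
      \<gamma> l * g l)) \<gamma>"
proof -
  have "((\<lambda>w. g w / (w - l)) has_contour_integral 2 * pi * \<i> * winding_number
      \<gamma> l * g l) \<gamma>"
    by (rule Cauchy_integral_formula_global[OF S g l \<gamma> \<gamma>_S loop zero])
  then have "((\<lambda>w. - (g w / (w - l))) has_contour_integral - (2 * pi * \<i> * winding_number
      \<gamma> l * g l)) \<gamma>"
    by (rule has_contour_integral_neg)
  then show ?thesis
  proof (rule has_contour_integral_eq)
    fix z assume "z \<in> path_image \<gamma>"
    then have "z \<noteq> l" using \<gamma>_S by auto
    then show "- (g z / (z - l)) = 1 / (l - z) * g z" by (simp add: field_simps)
  qed
qed

lemma has_contour_integral_double_pole: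
  assumes \<gamma>: "valid_path \<gamma>" "pathfinish \<gamma> = pathstart \<gamma>"
    and l: "l1 \<notin> path_image \<gamma>" "l2 \<notin> path_image \<gamma>"
    and wn: "winding_number \<gamma> l1 = winding_number \<gamma> l2"
  shows "((\<lambda>z. 1 / (l1 - z) * (1 / (l2 - z))) has_contour_integral 0) \<gamma>"
proof (cases "l1 = l2")
  case True
  have "((\<lambda>z. 1 / (l1 - z)\<^sup>2) has_contour_integral 0) \<gamma>"
  proof (rule Cauchy_theorem_primitive[of "- {l1}" "\<lambda>z. 1 / (l1 - z)"])
    fix x assume "x \<in> - {l1}"
    then show "((\<lambda>z. 1 / (l1 - z)) has_field_derivative 1 / (l1 - x)\<^sup>2) (at x within - {l1})"
      by (auto intro!: derivative_eq_intros simp: power2_eq_square field_simps)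
  qed (use \<gamma> l in auto)
  then show ?thesis using True by (simp add: power2_eq_square)
next
  case False
  have recip: "((\<lambda>z. 1 / (l - z)) has_contour_integral - (2 * pi * \<i> * winding_number
      \<gamma> l)) \<gamma>"
    if "l \<notin> path_image \<gamma>" for l
    using has_contour_integral_simple_pole[of UNIV "\<lambda>_. 1" l \<gamma>] \<gamma> that by auto
  have "((\<lambda>z. 1 / (l2 - l1) * (1 / (l1 - z) - 1 / (l2 - z))) has_contour_integral
      1 / (l2 - l1) * (- (2 * pi * \<i> * winding_number \<gamma> l1) - - (2 * pi * \<i> *
          winding_number \<gamma> l2))) \<gamma>"
    by (intro has_contour_integral_lmul has_contour_integral_diff recip l)
  then have "((\<lambda>z. 1 / (l2 - l1) * (1 / (l1 - z) - 1 / (l2 - z))) has_contour_integral 0) \<gamma>"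
    using wn by simp
  then show ?thesis
  proof (rule has_contour_integral_eq)
    fix z assume "z \<in> path_image \<gamma>"
    then have "z \<noteq> l1" "z \<noteq> l2" using l by auto
    then show "1 / (l2 - l1) * (1 / (l1 - z) - 1 / (l2 - z)) = 1 / (l1 - z) * (1 / (l2 - z))"
      using False by (simp add: field_simps)
  qed
qed

lemma has_contour_integral_simple_pole_sum:
  assumes J: "finite J" and S: "open S" and h: "\<And>j. j \<in> J \<Longrightarrow> h j holomorphic_on S"
    and \<gamma>: "valid_path \<gamma>" "pathfinish \<gamma>
        = pathstart \<gamma>" "path_image \<gamma> \<subseteq> S"
    and l: "\<And>j. j \<in> J \<Longrightarrow> l j \<in> S - path_image \<gamma>"
    and zero: "\<And>w. w \<notin> S \<Longrightarrow> winding_number \<gamma> w = 0"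
    and one: "\<And>j. j \<in> J \<Longrightarrow> winding_number \<gamma> (l j) = 1"
  shows "((\<lambda>z. \<Sum>j\<in>J. 1 / (l j - z) * h j z) has_contour_integral (\<Sum>j\<in>J. -
      (2 * pi * \<i> * h j (l j)))) \<gamma>"
proof (rule has_contour_integral_sum[OF J])
  fix j assume j: "j \<in> J"
  have "path_image \<gamma> \<subseteq> S - {l j}" using \<gamma>(3) l[OF j] by blast
  with l[OF j] have "((\<lambda>z. 1 / (l j - z) * h j z)
      has_contour_integral - (2 * pi * \<i> * winding_number \<gamma> (l j) * h j (l j))) \<gamma>"
    by (intro has_contour_integral_simple_pole[OF S h[OF j] _ \<gamma>(1) _ \<gamma>(2) zero]) auto
  then show "((\<lambda>z. 1 / (l j - z) * h j z) has_contour_integral - (2 * pi * \<i> *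
      h j (l j))) \<gamma>"
    using one[OF j] by simp
qed

lemma has_contour_integral_double_pole_sum:
  assumes J: "finite J" and \<gamma>: "valid_path \<gamma>" "pathfinish \<gamma> = pathstart \<gamma>"
    and l: "\<And>j. j \<in> J \<Longrightarrow> l j \<notin> path_image \<gamma>"
    and wn: "\<And>j k. j \<in> J \<Longrightarrow> k \<in> J
        \<Longrightarrow> winding_number \<gamma> (l j) = winding_number \<gamma> (l k)"
  shows "((\<lambda>z. \<Sum>j\<in>J. 1 / (l j - z) * (\<Sum>k\<in>J. 1 / (l k - z) * a j k))
      has_contour_integral 0) \<gamma>"
proof -
  have "((\<lambda>z. \<Sum>j\<in>J. 1 / (l j - z) * (\<Sum>k\<in>J. 1 / (l k - z) * a j k))
      has_contour_integral (\<Sum>j\<in>J. 0)) \<gamma>"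
  proof (rule has_contour_integral_sum[OF J])
    fix j assume j: "j \<in> J"
    have "((\<lambda>z. \<Sum>k\<in>J. 1 / (l j - z) * (1 / (l k - z)) * a j k) has_contour_integral
        (\<Sum>k\<in>J. 0)) \<gamma>"
    proof (rule has_contour_integral_sum[OF J])
      fix k assume k: "k \<in> J"
      show "((\<lambda>z. 1 / (l j - z) * (1 / (l k - z)) * a j k) has_contour_integral 0) \<gamma>"
        using has_contour_integral_rmul[OF has_contour_integral_double_pole[OF \<gamma> l[OF j]
            l[OF k] wn[OF j k]]]
        by simp
    qed
    then show "((\<lambda>z. 1 / (l j - z) * (\<Sum>k\<in>J. 1 / (l k - z) * a j k))
        has_contour_integral 0) \<gamma>"
      by (simp add: sum_distrib_left mult.assoc)
  qed
  then show ?thesis by simp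
qed

lemma norm_cscaleL_op_contour_integral_le:
  fixes f :: "complex \<Rightarrow> 'a::complex_inner \<Rightarrow>\<^sub>L 'a"
  assumes coeff: "\<And>u v. ((\<lambda>z. cinner u (blinfun_apply (f z) v))
      has_contour_integral I u v) \<gamma>"
    and bound: "\<And>u v. cmod (a * I u v) \<le> K * norm u * norm v" and K: "K \<ge> 0"
  shows "norm (cscaleL a (op_contour_integral f \<gamma>)) \<le> K"
proof -
  define G where "G t = cscaleL (vector_derivative \<gamma> (at t within {0..1})) (f (\<gamma> t))" for t
  have coeff_le: "cmod (cinner u (blinfun_apply (cscaleL a (integral {0..1} G)) v))
      \<le> K * norm v * norm u"
    for u v
  proof (cases "G integrable_on {0..1}")
    case True
    have lin: "bounded_linear (\<lambda>A. cinner u (blinfun_apply A v))"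
      by (rule bounded_linear_compose[OF bounded_bilinear.bounded_linear_right[OF bounded_bilinear_cinner]
            blinfun.bounded_linear_left])
    have "cinner u (blinfun_apply (integral {0..1} G) v)
        = integral {0..1} ((\<lambda>A. cinner u (blinfun_apply A v)) \<circ> G)"
      using integral_linear[OF True lin] by simp
    also have "(\<lambda>A. cinner u (blinfun_apply A v)) \<circ> G
        = (\<lambda>t. cinner u (blinfun_apply (f (\<gamma> t)) v) * vector_derivative \<gamma>
            (at t within {0..1}))"
      by (rule ext) (simp add: G_def cinner_scaleC_right mult.commute)
    also have "integral {0..1} \<dots> = I u v"
      using coeff[of u v] unfolding has_contour_integral_def by (rule integral_unique)
    finally have "cinner u (blinfun_apply (cscaleL a (integral {0..1} G)) v) = a * I u v"
      by (simp add: cinner_scaleC_right)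
    then show ?thesis using bound[of u v] by (simp add: mult.commute mult.left_commute)
  qed (use K in \<open>simp add: not_integrable_integral\<close>)
  have "norm (blinfun_apply (cscaleL a (integral {0..1} G)) v) \<le> K * norm v" for v
    by (rule norm_le_if_cinner_le[OF coeff_le]) (use K in simp)
  then show ?thesis
    unfolding op_contour_integral_def G_def[symmetric] by (rule norm_blinfun_bound[OF K])
qed

section \<open>The reduced resolvent integral\<close>

lemma exists_far_real_point:
  fixes A :: "complex set"
  assumes \<gamma>: "valid_path \<gamma>" "pathfinish \<gamma> = pathstart \<gamma>" and A: "finite A"
  shows "\<exists>c::real. complex_of_real c \<notin> path_image \<gamma>
      \<and> winding_number \<gamma> c = 0 \<and> (\<forall>a\<in>A. r \<le> cmod (c - a))"
proof -
  obtain B where B: "B > 0" "path_image \<gamma> \<subseteq> ball 0 B"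
    using bounded_subset_ballD[OF bounded_valid_path_image[OF \<gamma>(1)]] by blast
  obtain B' where B': "\<And>z. B' \<le> norm z \<Longrightarrow> winding_number \<gamma> z = 0"
    using winding_number_zero_at_infinity[OF valid_path_imp_path[OF \<gamma>(1)] \<gamma>(2)] by blast
  define L where "L = (\<Sum>a\<in>A. cmod a)"
  have L: "cmod a \<le> L" if "a \<in> A" for a
    unfolding L_def by (rule member_le_sum) (use A that in auto)
  define c where "c = B + \<bar>B'\<bar> + L + \<bar>r\<bar>"
  have L0: "L \<ge> 0" unfolding L_def by (simp add: sum_nonneg)
  then have "c \<ge> 0" "B \<le> c" "B' \<le> c" using B(1) by (auto simp: c_def)
  then have c: "cmod (complex_of_real c) = c" "B \<le> c" "B' \<le> c" by simp_all
  have "r + L \<le> c" using B(1) by (simp add: c_def)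
  then have "r \<le> cmod (c - a)" if "a \<in> A" for a :: complex
    using norm_triangle_ineq2[of "complex_of_real c" a] L[OF that] c(1) by linarith
  moreover have "complex_of_real c \<notin> path_image \<gamma>" using B(2) c by (auto simp: dist_norm)
  moreover have "winding_number \<gamma> c = 0" using B' c by simp
  ultimately show ?thesis by blast
qed

lemma mult_add_mult_le_norms:
  fixes a b c d u v :: real
  assumes "a \<ge> 0" "b \<ge> 0" "c \<ge> 0" "d \<ge> 0" "u \<ge> 0" "v \<ge> 0"
    and "u\<^sup>2 = a\<^sup>2 + d\<^sup>2" "v\<^sup>2 = b\<^sup>2 + c\<^sup>2"
  shows "a * b + c * d \<le> u * v"
proof -
  have "(u * v)\<^sup>2 - (a * b + c * d)\<^sup>2 = (a * c - b * d)\<^sup>2"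
    using assms(7,8) by (simp add: power_mult_distrib algebra_simps power2_eq_square)
  then have "(a * b + c * d)\<^sup>2 \<le> (u * v)\<^sup>2" by (smt (verit) zero_le_power2)
  then show ?thesis using assms by (meson mult_nonneg_nonneg power2_le_imp_le)
qed

lemma sum_le_sqrt_card_mult_sqrt_sum_squares:
  fixes f :: "'i \<Rightarrow> real"
  assumes "\<And>i. i \<in> I \<Longrightarrow> f i \<ge> 0"
  shows "(\<Sum>i\<in>I. f i) \<le> sqrt (card I) * sqrt (\<Sum>i\<in>I. (f i)\<^sup>2)"
proof -
  have "(\<Sum>i\<in>I. f i)\<^sup>2 \<le> (\<Sum>i\<in>I. (f i)\<^sup>2) * card I"
    by (rule sum_squared_le_sum_of_squares)
  then have "sqrt ((\<Sum>i\<in>I. f i)\<^sup>2)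
      \<le> sqrt ((\<Sum>i\<in>I. (f i)\<^sup>2) * card I)" by (rule real_sqrt_le_mono)
  moreover have "(\<Sum>i\<in>I. f i) \<ge> 0" using assms by (simp add: sum_nonneg)
  ultimately show ?thesis by (simp add: real_sqrt_mult mult.commute)
qed

context finite_eigenvalues
begin

lemma sum_norm_eproj_le:
  "(\<Sum>j\<in>{1..m}. norm (blinfun_apply (eproj j) x)) \<le> sqrt m * norm (blinfun_apply eproj_sum x)"
proof -
  have "(\<Sum>j\<in>{1..m}. norm (blinfun_apply (eproj j) x))
      \<le> sqrt (card {1..m}) * sqrt (\<Sum>j\<in>{1..m}. (norm (blinfun_apply (eproj j) x))\<^sup>2)"
    by (rule sum_le_sqrt_card_mult_sqrt_sum_squares) simp
  also have "(\<Sum>j\<in>{1..m}. (norm (blinfun_apply (eproj j) x))\<^sup>2)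
      = (norm (blinfun_apply eproj_sum x))\<^sup>2"
    by (rule norm_eproj_sum_square[symmetric])
  finally show ?thesis by simp
qed

text \<open>\<open>- residue_coeff c X u v\<close> is the sum of the residues of \<open>\<langle>u, R_z X R_z v\<rangle>\<close> at the
  eigenvalues, computed from the expansion of \<open>R_z\<close> through the resolvent of \<open>moved c\<close>; the terms
  with two poles contribute no residue.\<close>

definition residue_coeff :: "real \<Rightarrow> ('a \<Rightarrow>\<^sub>L 'a) \<Rightarrow> 'a \<Rightarrow> 'a \<Rightarrow> complex"
  where
  "residue_coeff c X u v =
     (\<Sum>k\<in>{1..m}. cinner u (blinfun_apply (resolvent (moved c) (lam k))
        (blinfun_apply eproj_compl (blinfun_apply X (blinfun_apply (eproj k) v)))))
   + (\<Sum>j\<in>{1..m}. cinner (blinfun_apply (eproj j) u)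
        (blinfun_apply X (blinfun_apply (resolvent (moved c) (lam j)) (blinfun_apply eproj_compl v))))"

lemma contour_in_resolvent_set_moved:
  assumes avoids: "path_image \<Gamma> \<inter> op_spectrum H = {}"
    and excludes: "\<forall>z\<in>op_spectrum H - lam ` {1..m}. winding_number \<Gamma> z = 0"
    and c: "complex_of_real c \<notin> path_image \<Gamma>" "winding_number \<Gamma> c = 0"
    and lam_c: "\<forall>j\<in>{1..m}. lam j \<notin> op_spectrum (moved c)"
  shows "path_image \<Gamma> \<subseteq> - op_spectrum (moved c)"
    and "\<And>w. w \<in> op_spectrum (moved c) \<Longrightarrow> winding_number \<Gamma> w = 0"
proof -
  show "path_image \<Gamma> \<subseteq> - op_spectrum (moved c)"
  proof
    fix z assume "z \<in> path_image \<Gamma>"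
    then have "z \<notin> op_spectrum H" "z \<noteq> complex_of_real c" using avoids c(1) by auto
    then show "z \<in> - op_spectrum (moved c)" using not_in_spectrum_moved by simp
  qed
  fix w assume w: "w \<in> op_spectrum (moved c)"
  show "winding_number \<Gamma> w = 0"
  proof (cases "w = complex_of_real c")
    case False
    then have "w \<in> op_spectrum H" using not_in_spectrum_moved w by blast
    moreover have "w \<notin> lam ` {1..m}" using w lam_c by auto
    ultimately show ?thesis using excludes by blast
  qed (use c(2) in simp)
qed

lemma residue_expansion_has_contour_integral:
  assumes \<Gamma>: "valid_path \<Gamma>" "pathfinish \<Gamma> = pathstart \<Gamma>"
    and path: "path_image \<Gamma> \<subseteq> - op_spectrum (moved c)"
    and wind: "\<And>w. w \<in> op_spectrum (moved c) \<Longrightarrow> winding_number \<Gamma> w = 0"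
    and encloses: "\<forall>j\<in>{1..m}. winding_number \<Gamma> (lam j) = 1"
    and lam_c: "\<forall>j\<in>{1..m}. lam j \<notin> op_spectrum (moved c) \<union> path_image \<Gamma>"
    and X: "clinear_op X"
  shows "((\<lambda>z. cinner u (blinfun_apply (resolvent (moved c) z) (blinfun_apply
      eproj_compl (blinfun_apply X
          (blinfun_apply (resolvent (moved c) z) (blinfun_apply eproj_compl v)))))
    + (\<Sum>k\<in>{1..m}. 1 / (lam k - z) * cinner u (blinfun_apply (resolvent (moved c) z)
          (blinfun_apply eproj_compl (blinfun_apply X (blinfun_apply (eproj k) v)))))
    + ((\<Sum>j\<in>{1..m}. 1 / (lam j - z) * cinner (blinfun_apply (eproj j) u)
          (blinfun_apply X (blinfun_apply (resolvent (moved c) z) (blinfun_apply eproj_compl v))))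
     + (\<Sum>j\<in>{1..m}. 1 / (lam j - z) * (\<Sum>k\<in>{1..m}. 1 / (lam k - z) *
          cinner (blinfun_apply (eproj j) u) (blinfun_apply X (blinfun_apply (eproj k) v))))))
    has_contour_integral - (2 * pi * \<i> * residue_coeff c X u v)) \<Gamma>"
proof -
  define S where "S = - op_spectrum (moved c)"
  have S: "open S" "S \<inter> op_spectrum (moved c) = {}"
    using open_resolvent_set[OF clinear_op_moved] by (auto simp: S_def)
  have wind_S: "winding_number \<Gamma> w = 0" if "w \<notin> S" for w
    using wind that by (simp add: S_def)
  define R' where "R' z = blinfun_apply (resolvent (moved c) z)" for z
  define g1 where "g1 j z
      = cinner (blinfun_apply (eproj j) u) (blinfun_apply X (R' z (blinfun_apply eproj_compl v)))" for j z
  define g2 where "g2 k z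
      = cinner u (R' z (blinfun_apply eproj_compl (blinfun_apply X (blinfun_apply (eproj k) v))))" for k z
  have hol: "g1 j holomorphic_on S" "g2 j holomorphic_on S" for j
    using holomorphic_resolvent_coeff[OF clinear_op_moved X S] holomorphic_resolvent_coeff[OF
        clinear_op_moved clinear_op_id S]
    by (simp_all add: g1_def[abs_def] g2_def[abs_def] R'_def)
  have "((\<lambda>z. cinner u (R' z (blinfun_apply (eproj_compl o\<^sub>L X) (R' z
      (blinfun_apply eproj_compl v)))))
      has_contour_integral 0) \<Gamma>"
    unfolding R'_def using path wind_S
    by (intro Cauchy_theorem_global[OF S(1) _ \<Gamma>] holomorphic_resolvent_sandwich_coeff
        clinear_op_moved clinear_op_compose[OF clinear_op_eproj_compl X] S) (auto simp: S_def)
  moreover have "((\<lambda>z. \<Sum>k\<in>{1..m}. 1 / (lam k - z) * g2 k z)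
      has_contour_integral (\<Sum>k\<in>{1..m}. - (2 * pi * \<i> * g2 k (lam k)))) \<Gamma>"
    by (rule has_contour_integral_simple_pole_sum[OF _ S(1) _ \<Gamma> path[folded S_def] _ wind_S])
      (use hol lam_c encloses in \<open>auto simp: S_def\<close>)
  moreover have "((\<lambda>z. \<Sum>j\<in>{1..m}. 1 / (lam j - z) * g1 j z)
      has_contour_integral (\<Sum>j\<in>{1..m}. - (2 * pi * \<i> * g1 j (lam j)))) \<Gamma>"
    by (rule has_contour_integral_simple_pole_sum[OF _ S(1) _ \<Gamma> path[folded S_def] _ wind_S])
      (use hol lam_c encloses in \<open>auto simp: S_def\<close>)
  moreover have "((\<lambda>z. \<Sum>j\<in>{1..m}. 1 / (lam j - z) * (\<Sum>k\<in>{1..m}. 1 / (lam k - z) *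
      cinner (blinfun_apply (eproj j) u) (blinfun_apply X (blinfun_apply (eproj k) v))))
          has_contour_integral 0) \<Gamma>"
    using encloses lam_c by (intro has_contour_integral_double_pole_sum[OF _ \<Gamma>]) auto
  ultimately have "((\<lambda>z. cinner u (R' z (blinfun_apply eproj_compl (blinfun_apply X (R' z
      (blinfun_apply eproj_compl v)))))
      + (\<Sum>k\<in>{1..m}. 1 / (lam k - z) * g2 k z) + ((\<Sum>j\<in>{1..m}. 1 / (lam j - z) * g1 j z)
      + (\<Sum>j\<in>{1..m}. 1 / (lam j - z) * (\<Sum>k\<in>{1..m}. 1 / (lam k - z) *
          cinner (blinfun_apply (eproj j) u) (blinfun_apply X (blinfun_apply (eproj k) v))))))
    has_contour_integral 0 + (\<Sum>k\<in>{1..m}. - (2 * pi * \<i> * g2 k (lam k)))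
      + ((\<Sum>j\<in>{1..m}. - (2 * pi * \<i> * g1 j (lam j))) + 0)) \<Gamma>"
    by (intro has_contour_integral_add) simp_all
  moreover have "residue_coeff c X u v = (\<Sum>k\<in>{1..m}. g2 k (lam k))
      + (\<Sum>j\<in>{1..m}. g1 j (lam j))"
    by (simp add: residue_coeff_def g1_def g2_def R'_def)
  ultimately show ?thesis
    by (simp add: g1_def g2_def R'_def sum_negf distrib_left flip: sum_distrib_left)
qed

lemma resolvent_sandwich_coeff_has_contour_integral:
  assumes \<Gamma>: "valid_path \<Gamma>" "pathfinish \<Gamma> = pathstart \<Gamma>"
    and avoids: "path_image \<Gamma> \<inter> op_spectrum H = {}"
    and encloses: "\<forall>j\<in>{1..m}. winding_number \<Gamma> (lam j) = 1"
    and excludes: "\<forall>z\<in>op_spectrum H - lam ` {1..m}. winding_number \<Gamma> z = 0"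
    and c: "complex_of_real c \<notin> path_image \<Gamma>" "winding_number \<Gamma> c = 0"
    and lam_c: "\<forall>j\<in>{1..m}. lam j \<notin> op_spectrum (moved c)"
    and X: "clinear_op X"
  shows "((\<lambda>z. cinner u (blinfun_apply (resolvent H z) (blinfun_apply X (blinfun_apply
      (resolvent H z) v))))
    has_contour_integral - (2 * pi * \<i> * residue_coeff c X u v)) \<Gamma>"
proof -
  note path = contour_in_resolvent_set_moved(1)[OF avoids excludes c lam_c]
  have lam_path: "lam j \<notin> path_image \<Gamma>" if "j \<in> {1..m}" for j
    using avoids eigenvalue_in_spectrum[of H "lam j"] eigenvalue that by auto
  let ?E = "\<lambda>z. cinner u (blinfun_apply (resolvent (moved c) z) (blinfun_apply
      eproj_compl (blinfun_apply X
          (blinfun_apply (resolvent (moved c) z) (blinfun_apply eproj_compl v)))))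
    + (\<Sum>k\<in>{1..m}. 1 / (lam k - z) * cinner u (blinfun_apply (resolvent (moved c) z)
          (blinfun_apply eproj_compl (blinfun_apply X (blinfun_apply (eproj k) v)))))
    + ((\<Sum>j\<in>{1..m}. 1 / (lam j - z) * cinner (blinfun_apply (eproj j) u)
          (blinfun_apply X (blinfun_apply (resolvent (moved c) z) (blinfun_apply eproj_compl v))))
     + (\<Sum>j\<in>{1..m}. 1 / (lam j - z) * (\<Sum>k\<in>{1..m}. 1 / (lam k - z) *
          cinner (blinfun_apply (eproj j) u) (blinfun_apply X (blinfun_apply (eproj k) v)))))"
  have "(?E has_contour_integral - (2 * pi * \<i> * residue_coeff c X u v)) \<Gamma>"
    using lam_c lam_path
    by (intro residue_expansion_has_contour_integral[OF \<Gamma> path _ encloses _ X]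
        contour_in_resolvent_set_moved(2)[OF avoids excludes c lam_c]) auto
  moreover have "?E z
      = cinner u (blinfun_apply (resolvent H z) (blinfun_apply X (blinfun_apply (resolvent H z) v)))"
    if "z \<in> path_image \<Gamma>" for z
  proof -
    have "z \<notin> op_spectrum H" "z \<notin> op_spectrum (moved c)" "z \<notin> lam ` {1..m}"
      using that avoids path lam_path by auto
    from resolvent_sandwich_coeff_expansion[OF X this, of u v] show ?thesis by simp
  qed
  ultimately show ?thesis by (rule has_contour_integral_eq)
qed

end

locale finite_eigenvalues_gap = finite_eigenvalues +
  fixes g :: real
  assumes gap_pos: "g > 0"
    and gap: "\<And>j s. j \<in> {1..m} \<Longrightarrow> s \<in> op_spectrum H - lam ` {1..m}
        \<Longrightarrow> g \<le> cmod (s - lam j)"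
begin

lemma eigenvalue_not_in_spectrum_moved:
  assumes c: "\<forall>a\<in>lam ` {1..m}. g \<le> cmod (c - a)" and j: "j \<in> {1..m}"
  shows "lam j \<notin> op_spectrum (moved c)"
proof -
  obtain l where l: "lam j = complex_of_real l" using eigenvalue_real[OF j] by blast
  define D where "D = insert g ((\<lambda>k. cmod (lam k - lam j)) ` ({1..m} - {j}))"
  have "finite D" by (simp add: D_def)
  moreover have "\<forall>d\<in>D. d > 0"
    using gap_pos distinct j by (auto simp: D_def dest: inj_onD)
  ultimately have \<epsilon>: "Min D > 0" "Min D \<le> g" and \<epsilon>_lam: "\<And>k. k
      \<in> {1..m} - {j} \<Longrightarrow> Min D \<le> cmod (lam k - lam j)"
    by (auto simp: D_def)
  have c_lam: "complex_of_real c \<notin> lam ` {1..m}" using c gap_pos by force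
  have "complex_of_real l \<notin> op_spectrum (moved c)"
  proof (rule self_adjoint_isolated_not_in_spectrum[OF self_adjoint_moved _ \<epsilon>(1)])
    show "\<not> is_eigenvalue (moved c) (complex_of_real l)"
      using not_eigenvalue_moved[OF c_lam j] l by simp
    fix s assume s: "s \<in> op_spectrum (moved c)"
    show "s = complex_of_real l \<or> Min D \<le> cmod (s - complex_of_real l)"
    proof (cases "s = complex_of_real c")
      case False
      then have "s \<in> op_spectrum H" using not_in_spectrum_moved s by blast
      then consider k where "k \<in> {1..m}" "s = lam k" | "s \<in> op_spectrum H - lam ` {1..m}" by blast
      then show ?thesis
        by cases (use \<epsilon> \<epsilon>_lam gap[OF j] l in \<open>fastforce+\<close>)
    next
      case True
      have "g \<le> cmod (complex_of_real c - lam j)" using c j by blast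
      then show ?thesis using True \<epsilon>(2) l by simp
    qed
  qed
  then show ?thesis using l by simp
qed

lemma dist_spectrum_moved_eigenvalue:
  assumes c: "\<forall>a\<in>lam ` {1..m}. g \<le> cmod (c - a)" and s: "s
      \<in> op_spectrum (moved c)" and j: "j \<in> {1..m}"
  shows "g \<le> cmod (s - lam j)"
proof (cases "s = complex_of_real c")
  case False
  then have "s \<in> op_spectrum H" using not_in_spectrum_moved s by blast
  moreover have "s \<notin> lam ` {1..m}" using eigenvalue_not_in_spectrum_moved[OF c] s by blast
  ultimately show ?thesis using gap[OF j] by blast
qed (use c j in auto)

lemma norm_resolvent_moved_le:
  assumes c: "\<forall>a\<in>lam ` {1..m}. g \<le> cmod (c - a)" and j: "j \<in> {1..m}"
  shows "norm (resolvent (moved c) (lam j)) \<le> 1 / g"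
proof -
  obtain l where l: "lam j = complex_of_real l" using eigenvalue_real[OF j] by blast
  show ?thesis
    unfolding l
    by (rule self_adjoint_norm_resolvent_le[OF self_adjoint_moved _ gap_pos])
      (use eigenvalue_not_in_spectrum_moved[OF c j] dist_spectrum_moved_eigenvalue[OF c _ j] l in auto)
qed

lemma norm_resolvent_moved_apply_le:
  assumes c: "\<forall>a\<in>lam ` {1..m}. g \<le> cmod (c - a)" and j: "j \<in> {1..m}"
  shows "norm (blinfun_apply (resolvent (moved c) (lam j)) y) \<le> norm y / g"
proof -
  have "norm (blinfun_apply (resolvent (moved c) (lam j)) y)
      \<le> norm (resolvent (moved c) (lam j)) * norm y"
    by (rule norm_blinfun)
  also have "\<dots> \<le> 1 / g * norm y"
    by (rule mult_right_mono[OF norm_resolvent_moved_le[OF c j]]) simp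
  finally show ?thesis by simp
qed

lemma cmod_cinner_resolvent_moved_compl_le:
  assumes c: "\<forall>a\<in>lam ` {1..m}. g \<le> cmod (c - a)" and j: "j \<in> {1..m}"
  shows "cmod (cinner u (blinfun_apply (resolvent (moved c) (lam j)) (blinfun_apply eproj_compl y)))
    \<le> norm (blinfun_apply eproj_compl u) * (norm y / g)"
proof -
  have "cinner u (blinfun_apply (resolvent (moved c) (lam j)) (blinfun_apply eproj_compl y))
      = cinner (blinfun_apply eproj_compl u) (blinfun_apply (resolvent (moved c) (lam j)) y)"
    using resolvent_moved_eproj_compl_commute[OF eigenvalue_not_in_spectrum_moved[OF c j]]
    by (simp add: eproj_compl_self_adjoint)
  also have "cmod \<dots>
      \<le> norm (blinfun_apply eproj_compl u) * norm (blinfun_apply (resolvent (moved c) (lam j)) y)"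
    by (rule cinner_Cauchy_Schwarz)
  also have "\<dots> \<le> norm (blinfun_apply eproj_compl u) * (norm y / g)"
    by (intro mult_left_mono norm_resolvent_moved_apply_le[OF c j]) simp
  finally show ?thesis .
qed

lemma norm_residue_coeff_le:
  assumes c: "\<forall>a\<in>lam ` {1..m}. g \<le> cmod (c - a)"
  shows "cmod (residue_coeff c X u v) \<le> sqrt m * norm X * norm u * norm v / g"
proof -
  let ?P = "\<lambda>j. blinfun_apply (eproj j)" and ?Q = "blinfun_apply eproj_compl"
    and ?P_sum = "blinfun_apply eproj_sum"
  have "cmod (residue_coeff c X u v)
      \<le> (\<Sum>k\<in>{1..m}. norm (?Q u) * (norm X * norm (?P k v) / g))
       + (\<Sum>j\<in>{1..m}. norm (?Q v) * (norm X * norm (?P j u) / g))"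
    unfolding residue_coeff_def
  proof (intro order_trans[OF norm_triangle_ineq] add_mono order_trans[OF norm_sum] sum_mono)
    fix k assume k: "k \<in> {1..m}"
    show "cmod (cinner u (blinfun_apply (resolvent (moved c) (lam k)) (?Q (blinfun_apply X (?P k v)))))
        \<le> norm (?Q u) * (norm X * norm (?P k v) / g)"
      using gap_pos by (intro order_trans[OF cmod_cinner_resolvent_moved_compl_le[OF c k]]
          mult_left_mono divide_right_mono norm_blinfun) auto
  next
    fix j assume j: "j \<in> {1..m}"
    have "cmod (cinner (?P j u) (blinfun_apply X (blinfun_apply (resolvent (moved c) (lam j)) (?Q v))))
        \<le> norm (?P j u) * (norm X * norm (blinfun_apply (resolvent (moved c) (lam j)) (?Q v)))"
      by (intro order_trans[OF cinner_Cauchy_Schwarz] mult_left_mono norm_blinfun) simp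
    also have "\<dots> \<le> norm (?P j u) * (norm X * (norm (?Q v) / g))"
      by (intro mult_left_mono norm_resolvent_moved_apply_le[OF c j]) auto
    finally show "cmod (cinner (?P j u) (blinfun_apply X (blinfun_apply (resolvent (moved
        c) (lam j)) (?Q v))))
        \<le> norm (?Q v) * (norm X * norm (?P j u) / g)"
      by (simp add: field_simps)
  qed
  also have "\<dots> = norm X / g * (norm (?Q u) * (\<Sum>k\<in>{1..m}. norm (?P k v))
      + norm (?Q v) * (\<Sum>j\<in>{1..m}. norm (?P j u)))"
    by (simp add: sum_distrib_left distrib_left mult_ac)
  also have "\<dots> \<le> norm X / g * (norm (?Q u) * (sqrt m * norm (?P_sum v))
      + norm (?Q v) * (sqrt m * norm (?P_sum u)))"
    using gap_pos by (intro mult_left_mono add_mono sum_norm_eproj_le) auto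
  also have "\<dots> = sqrt m * norm X / g * (norm (?Q u) * norm (?P_sum v)
      + norm (?Q v) * norm (?P_sum u))"
    by (simp add: algebra_simps)
  also have "\<dots> \<le> sqrt m * norm X / g * (norm u * norm v)"
    using gap_pos norm_eproj_split[of u] norm_eproj_split[of v]
    by (intro mult_left_mono mult_add_mult_le_norms) (auto simp: add.commute)
  finally show ?thesis by simp
qed

end

theorem lemma7:
  fixes H X :: "'a::{complex_inner, complete_space} \<Rightarrow>\<^sub>L 'a"
    and lam :: "nat \<Rightarrow> complex" and m :: nat
    and \<Gamma> :: "real \<Rightarrow> complex"
  assumes H_sa: "self_adjoint_op H"
    and eig: "\<forall>j\<in>{1..m}. is_eigenvalue H (lam j)"
    and distinct: "inj_on lam {1..m}"
    and gap: "setdist (lam ` {1..m}) (op_spectrum H - lam ` {1..m}) > 0"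
    and \<Gamma>_contour: "simple_path \<Gamma>" "valid_path \<Gamma>" "pathfinish \<Gamma> = pathstart \<Gamma>"
    and \<Gamma>_avoids: "path_image \<Gamma> \<inter> op_spectrum H = {}"
    and \<Gamma>_encloses: "\<forall>j\<in>{1..m}. winding_number \<Gamma> (lam j) = 1"
    and \<Gamma>_excludes: "\<forall>z\<in>op_spectrum H - lam ` {1..m}. winding_number \<Gamma> z = 0"
    and X_bounded: "clinear_op X"
  shows "norm (tilde_op H \<Gamma> X)
           \<le> sqrt (real m) * norm X / setdist (lam ` {1..m}) (op_spectrum H - lam ` {1..m})"
proof -
  define g where "g = setdist (lam ` {1..m}) (op_spectrum H - lam ` {1..m})"
  have "g \<le> cmod (s - lam j)" if "j \<in> {1..m}" "s \<in> op_spectrum H - lam ` {1..m}" for j s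
    using setdist_le_dist[of "lam j" _ s] that by (simp add: g_def dist_norm norm_minus_commute)
  then interpret finite_eigenvalues_gap H lam m g
    using H_sa eig distinct gap by unfold_locales (simp_all add: g_def)
  obtain c :: real where c: "complex_of_real c \<notin> path_image \<Gamma>" "winding_number \<Gamma> c = 0"
    "\<forall>a\<in>lam ` {1..m}. g \<le> cmod (c - a)"
    using exists_far_real_point[OF \<Gamma>_contour(2,3), of "lam ` {1..m}" g] by blast
  have "((\<lambda>z. cinner u (blinfun_apply (resolvent H z o\<^sub>L X o\<^sub>L resolvent H z) v))
      has_contour_integral - (2 * pi * \<i> * residue_coeff c X u v)) \<Gamma>" for u v
    using resolvent_sandwich_coeff_has_contour_integral[OF \<Gamma>_contour(2,3) \<Gamma>_avoids \<Gamma>_encloses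
        \<Gamma>_excludes c(1,2) _ X_bounded] eigenvalue_not_in_spectrum_moved[OF c(3)]
    by simp
  then show ?thesis
    unfolding tilde_op_def g_def[symmetric]
  proof (rule norm_cscaleL_op_contour_integral_le)
    fix u v
    show "cmod (1 / (2 * complex_of_real pi * \<i>) * - (2 * pi * \<i> * residue_coeff c X u v))
        \<le> sqrt m * norm X / g * norm u * norm v"
      using norm_residue_coeff_le[OF c(3), of X u v] by (simp add: norm_mult norm_divide)
  qed (use gap_pos in simp)
qed

end
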